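(* Let $\ell\ge2$, $\rho\in(-\frac{1}{\ell-1},1)$, $m\in\{2,\dots,\ell\}$ and $\gamma>0$. Let $X=(X_1,\dots,X_\ell)^T$ be zero-mean Gaussian with covariance matrix having all diagonal entries $1$ and all off-diagonal entries $\rho$. Let $M$ be the $m\times m$ matrix with diagonal entries $m-1$ and off-diagonal entries $-1$. For each $m$-subset $\mathcal{S}=\{i_1<\dots<i_m\}$ of $\{1,\dots,\ell\}$ define \[ (U^-_{\mathcal{S},1}(\gamma),\dots,U^-_{\mathcal{S},m}(\gamma))^T=M(X_{i_1},\dots,X_{i_m})^T+\sqrt{\gamma}\,(N^-_{\mathcal{S},1},\dots,N^-_{\mathcal{S},m})^T, \] where each $(N^-_{\mathcal{S},1},\dots,N^-_{\mathcal{S},m})^T$ is a zero-mean Gaussian vector with covariance matrix $M$, and $X$ and these noise vectors (over all $m$-subsets $\mathcal{S}$) are mutually independent. Then the error covariance matrix $\mathbb{E}[(X-\mathbb{E}[X|\omega])(X-\mathbb{E}[X|\omega])^T]$, where $\omega=(U^-_{\mathcal{S},j}(\gamma): j=1,\dots,m,\ |\mathcal{S}|=m)$, has all diagonal entries equal to \[ d^-(\gamma)= 1-\frac{\binom{\ell-2}{m-2}(\ell-1)(1-\rho)^2}{\gamma+\binom{\ell-2}{m-2}\ell(1-\rho)} \] and all off-diagonal entries equal to \[ \theta^-(\gamma)=\rho+\frac{\binom{\ell-2}{m-2}(1-\rho)^2}{\gamma+\binom{\ell-2}{m-2}\ell(1-\rho)}. \] *)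

theory Defs
  imports "HOL-Probability.Probability"
begin

text \<open>A random vector Y (components Y w i, i in I, I finite) is zero-mean Gaussian with
  covariance matrix C (possibly singular), defined via its characteristic function:
  E[exp(i * sum_i t_i Y_i)] = exp(-(t^T C t)/2) for all t.\<close>
definition gaussian_vec ::
  "'a measure \<Rightarrow> nat set \<Rightarrow> ('a \<Rightarrow> nat \<Rightarrow> real) \<Rightarrow> (nat \<Rightarrow> nat \<Rightarrow> real) \<Rightarrow> bool" where
  "gaussian_vec P I Y C \<longleftrightarrow>
     (\<forall>i\<in>I. (\<lambda>w. Y w i) \<in> borel_measurable P) \<and>
     (\<forall>t::nat \<Rightarrow> real.
        (CLINT w|P. iexp (\<Sum>i\<in>I. t i * Y w i))
          = complex_of_real (exp (- (\<Sum>i\<in>I. \<Sum>j\<in>I. t i * C i j * t j) / 2)))"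

definition gen_sigma :: "'a measure \<Rightarrow> ('b \<Rightarrow> 'a \<Rightarrow> real) \<Rightarrow> 'b set \<Rightarrow> 'a measure" where
  "gen_sigma P f K =
     sigma (space P) {f k -` B \<inter> space P | k B. k \<in> K \<and> B \<in> sets (borel :: real measure)}"

definition Mmat :: "nat \<Rightarrow> nat \<Rightarrow> nat \<Rightarrow> real" where
  "Mmat m j k = (if j = k then real m - 1 else -1)"

definition elem_of :: "nat set \<Rightarrow> nat \<Rightarrow> nat" where
  "elem_of S j = sorted_list_of_set S ! j"

end

theory Submission
  imports Defs
begin

(* The vector X and the noise vectors N_S are independent and Gaussian, so every linear
   combination of their components is a centred Gaussian variable whose variance is the quadratic
   form of the block-diagonal covariance matrix.  Let Xhat_i be alpha times the sum of the
   observations U_{S,j} in which X_i enters with weight m - 1, where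
   alpha = (1 - rho) / ((1 - rho) binom(l-2, m-2) l + gamma).  This choice of alpha makes the
   residual X_i - Xhat_i uncorrelated with every observation.  For jointly Gaussian variables the
   joint characteristic function then factorises, and the multivariate Levy uniqueness theorem
   (derived here from the one-dimensional one) shows that the residual is independent of all
   observations.  Hence Xhat_i is the conditional expectation, the error covariance matrix is the
   covariance matrix of the residuals, and counting the m-subsets that contain one or two given
   indices yields the stated entries. *)

section \<open>Characteristic functions determine joint laws\<close>

lemma iexp_add: "iexp (u + v) = iexp u * iexp v"
  by (simp add: distrib_left exp_add)

lemma iexp_sum: "finite A \<Longrightarrow> iexp (\<Sum>x\<in>A. f x) = (\<Prod>x\<in>A. iexp (f x))"
  by (simp add: sum_distrib_left exp_sum)

lemma
  fixes h :: "'q \<times> bool \<Rightarrow> 'b::{banach,second_countable_topology}"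
  assumes Q: "prob_space Q" and h: "h \<in> borel_measurable (Q \<Otimes>\<^sub>M count_space UNIV)"
    and h_bounded: "\<And>z. norm (h z) \<le> C"
  shows integrable_pair_count_space_bool: "integrable (Q \<Otimes>\<^sub>M count_space UNIV) h"
    and integral_pair_count_space_bool:
      "integral\<^sup>L (Q \<Otimes>\<^sub>M count_space UNIV) h = (\<integral>x. h (x, True) \<partial>Q) + (\<integral>x. h (x, False) \<partial>Q)"
proof -
  interpret Q: prob_space Q by fact
  interpret B: finite_measure "count_space (UNIV :: bool set)" by (rule finite_measure_count_space) simp
  interpret pair_sigma_finite Q "count_space (UNIV :: bool set)" ..
  interpret QB: finite_measure "Q \<Otimes>\<^sub>M count_space (UNIV :: bool set)"
    by (rule finite_measure_pair_measure) unfold_locales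
  have [measurable]: "(\<lambda>x. h (x, b)) \<in> borel_measurable Q" for b
    using h by measurable
  show "integrable (Q \<Otimes>\<^sub>M count_space UNIV) h"
    by (rule QB.integrable_const_bound[where B=C]) (use h_bounded h in auto)
  then have "integral\<^sup>L (Q \<Otimes>\<^sub>M count_space UNIV) h = (\<integral>x. (\<integral>b. h (x, b) \<partial>count_space UNIV) \<partial>Q)"
    by (simp add: integral_fst')
  also have "\<dots> = (\<integral>x. h (x, True) + h (x, False) \<partial>Q)"
    by (simp add: lebesgue_integral_count_space_finite UNIV_bool add.commute)
  also have "\<dots> = (\<integral>x. h (x, True) \<partial>Q) + (\<integral>x. h (x, False) \<partial>Q)"
    by (intro Bochner_Integration.integral_add Q.integrable_const_bound[where B=C])
       (auto simp: h_bounded)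
  finally show "integral\<^sup>L (Q \<Otimes>\<^sub>M count_space UNIV) h = (\<integral>x. h (x, True) \<partial>Q) + (\<integral>x. h (x, False) \<partial>Q)" .
qed

lemma integral_distr_density_weight:
  fixes W F :: "'r \<Rightarrow> real" and g :: "real \<Rightarrow> 'b::{banach,second_countable_topology}"
  assumes [measurable]: "W \<in> borel_measurable R" "F \<in> borel_measurable R" "g \<in> borel_measurable borel"
    and W_nonneg: "\<And>z. 0 \<le> W z"
  shows "integral\<^sup>L (distr (density R W) borel F) g = (\<integral>z. W z *\<^sub>R g (F z) \<partial>R)"
  using W_nonneg by (subst integral_distr) (auto simp: integral_density)

lemma real_distribution_distr_density:
  fixes W F :: "'r \<Rightarrow> real"
  assumes [measurable]: "W \<in> borel_measurable R" "F \<in> borel_measurable R"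
    and W_nonneg: "\<And>z. 0 \<le> W z" and W_int: "integrable R W" and W_total: "(\<integral>z. W z \<partial>R) = 1"
  shows "real_distribution (distr (density R W) borel F)"
proof -
  have "prob_space (density R W)"
  proof
    have "emeasure (density R W) (space R) = ennreal (\<integral>z. W z \<partial>R)"
      using W_nonneg W_int by (simp add: emeasure_density nn_integral_eq_integral)
    then show "emeasure (density R W) (space (density R W)) = 1"
      by (simp add: W_total)
  qed
  then show ?thesis
    by (auto simp: real_distribution_def real_distribution_axioms_def intro: prob_space.prob_space_distr)
qed

lemma Levy_uniqueness_density:
  fixes F W1 W2 :: "'r \<Rightarrow> real"
  assumes [measurable]: "F \<in> borel_measurable R" "W1 \<in> borel_measurable R" "W2 \<in> borel_measurable R"
    and W_nonneg: "\<And>z. 0 \<le> W1 z" "\<And>z. 0 \<le> W2 z" and W_int: "integrable R W1" "integrable R W2"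
    and W_total: "(\<integral>z. W1 z \<partial>R) = 1" "(\<integral>z. W2 z \<partial>R) = 1"
    and char_eq: "\<And>s. (\<integral>z. W1 z *\<^sub>R iexp (s * F z) \<partial>R) = (\<integral>z. W2 z *\<^sub>R iexp (s * F z) \<partial>R)"
    and B[measurable]: "B \<in> sets borel"
  shows "(\<integral>z. W1 z * indicator B (F z) \<partial>R) = (\<integral>z. W2 z * indicator B (F z) \<partial>R)"
proof -
  have "char (distr (density R W) borel F) s = (\<integral>z. W z *\<^sub>R iexp (s * F z) \<partial>R)"
    if "W \<in> borel_measurable R" "\<And>z. 0 \<le> W z" for W s
    unfolding char_def using that by (intro integral_distr_density_weight) auto
  then have "char (distr (density R W1) borel F) = char (distr (density R W2) borel F)"
    using W_nonneg by (intro ext) (simp only: char_eq measurable)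
  then have "distr (density R W1) borel F = distr (density R W2) borel F"
    using W_nonneg W_int W_total by (intro Levy_uniqueness real_distribution_distr_density) auto
  have indicator_eq: "integral\<^sup>L (distr (density R W) borel F) (indicator B) = (\<integral>z. W z * indicator B (F z) \<partial>R)"
    if "W \<in> borel_measurable R" "\<And>z. 0 \<le> W z" for W
    using that by (subst integral_distr_density_weight) auto
  have "(\<integral>z. W1 z * indicator B (F z) \<partial>R) = integral\<^sup>L (distr (density R W1) borel F) (indicator B)"
    using W_nonneg by (simp only: indicator_eq measurable)
  also have "\<dots> = integral\<^sup>L (distr (density R W2) borel F) (indicator B)"
    by (simp only: \<open>distr (density R W1) borel F = distr (density R W2) borel F\<close>)
  also have "\<dots> = (\<integral>z. W2 z * indicator B (F z) \<partial>R)"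
    using W_nonneg by (simp only: indicator_eq measurable)
  finally show ?thesis .
qed

lemma Levy_uniqueness_weighted:
  fixes F W1 W2 :: "'r \<Rightarrow> real"
  assumes "finite_measure R"
    and [measurable]: "F \<in> borel_measurable R" "W1 \<in> borel_measurable R" "W2 \<in> borel_measurable R"
    and W_nonneg: "\<And>z. 0 \<le> W1 z" "\<And>z. 0 \<le> W2 z" and W_bounded: "\<And>z. W1 z \<le> C" "\<And>z. W2 z \<le> C"
    and char_eq: "\<And>s. (\<integral>z. W1 z *\<^sub>R iexp (s * F z) \<partial>R) = (\<integral>z. W2 z *\<^sub>R iexp (s * F z) \<partial>R)"
    and B[measurable]: "B \<in> sets borel"
  shows "(\<integral>z. W1 z * indicator B (F z) \<partial>R) = (\<integral>z. W2 z * indicator B (F z) \<partial>R)"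
proof -
  interpret R: finite_measure R by fact
  have W_int: "integrable R W1" "integrable R W2"
    using W_nonneg W_bounded by (auto intro!: R.integrable_const_bound[where B=C])
  define c where "c = (\<integral>z. W1 z \<partial>R)"
  have "complex_of_real (\<integral>z. W1 z \<partial>R) = complex_of_real (\<integral>z. W2 z \<partial>R)"
    using char_eq[of 0] by (simp add: integral_scaleR_left[symmetric] scaleR_conv_of_real)
  then have c_eq: "c = (\<integral>z. W2 z \<partial>R)"
    by (simp add: c_def)
  show ?thesis
  proof (cases "c = 0")
    case True
    have "(\<integral>z. W z * indicator B (F z) \<partial>R) = 0"
      if [measurable]: "W \<in> borel_measurable R" and "\<And>z. 0 \<le> W z" "integrable R W" "(\<integral>z. W z \<partial>R) = 0"
      for W :: "'r \<Rightarrow> real"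
    proof -
      have "AE z in R. W z = 0"
        using that by (subst integral_nonneg_eq_0_iff_AE[symmetric]) auto
      then show ?thesis
        by (intro integral_eq_zero_AE) (auto elim!: eventually_mono)
    qed
    then show ?thesis
      using W_nonneg W_int True c_eq by (simp add: c_def)
  next
    case False
    then have "c > 0"
      unfolding c_def using W_nonneg by (simp add: order_less_le)
    have "(\<integral>z. (W1 z / c) * indicator B (F z) \<partial>R) = (\<integral>z. (W2 z / c) * indicator B (F z) \<partial>R)"
      using W_nonneg W_int \<open>c > 0\<close> c_eq char_eq
      by (intro Levy_uniqueness_density) (auto simp: c_def divide_inverse_commute simp flip: scaleR_scaleR)
    then show ?thesis
      using \<open>c > 0\<close> by simp
  qed
qed

text \<open>Two signed weights are reduced to one pair of nonnegative weights on the doubled space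
  \<open>Q \<times> bool\<close>, on which \<open>(f1, g1)\<close> lives in the \<open>True\<close> copy and \<open>(f2, g2)\<close> in the \<open>False\<close> copy.\<close>

lemma Levy_uniqueness_signed_weights:
  fixes f1 f2 g1 g2 :: "'q \<Rightarrow> real"
  assumes Q: "prob_space Q"
    and [measurable]: "f1 \<in> borel_measurable Q" "f2 \<in> borel_measurable Q"
      "g1 \<in> borel_measurable Q" "g2 \<in> borel_measurable Q"
    and g_bounded: "\<And>x. \<bar>g1 x\<bar> \<le> C" "\<And>x. \<bar>g2 x\<bar> \<le> C"
    and char_eq: "\<And>s. (\<integral>x. g1 x *\<^sub>R iexp (s * f1 x) \<partial>Q) = (\<integral>x. g2 x *\<^sub>R iexp (s * f2 x) \<partial>Q)"
    and B[measurable]: "B \<in> sets borel"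
  shows "(\<integral>x. g1 x * indicator B (f1 x) \<partial>Q) = (\<integral>x. g2 x * indicator B (f2 x) \<partial>Q)"
proof -
  define R where "R = Q \<Otimes>\<^sub>M count_space (UNIV :: bool set)"
  define F where "F z = (if snd z then f1 (fst z) else f2 (fst z))" for z
  define W1 where "W1 z = (if snd z then max (g1 (fst z)) 0 else max (- g2 (fst z)) 0)" for z
  define W2 where "W2 z = (if snd z then max (- g1 (fst z)) 0 else max (g2 (fst z)) 0)" for z
  have [measurable]: "F \<in> borel_measurable R" "W1 \<in> borel_measurable R" "W2 \<in> borel_measurable R"
    unfolding F_def W1_def W2_def R_def by measurable
  have W_bounded: "0 \<le> W1 z" "0 \<le> W2 z" "W1 z \<le> C" "W2 z \<le> C" for z
    using g_bounded[of "fst z"] by (auto simp: W1_def W2_def)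
  have doubled: "integrable R (\<lambda>z. W z *\<^sub>R \<phi> (F z))"
    "(\<integral>z. W z *\<^sub>R \<phi> (F z) \<partial>R) = (\<integral>x. W (x, True) *\<^sub>R \<phi> (f1 x) \<partial>Q) + (\<integral>x. W (x, False) *\<^sub>R \<phi> (f2 x) \<partial>Q)"
    if [measurable]: "W \<in> borel_measurable R" "\<phi> \<in> borel_measurable borel"
      and bounded: "\<And>z. \<bar>W z\<bar> \<le> 2 * C" "\<And>x. norm (\<phi> x) \<le> 1"
    for W and \<phi> :: "real \<Rightarrow> 'b::{banach,second_countable_topology}"
  proof -
    have "norm (W z *\<^sub>R \<phi> (F z)) \<le> 2 * C" for z
      using mult_mono[OF bounded(1)[of z] bounded(2)[of "F z"]] order_trans[OF abs_ge_zero bounded(1)[of z]]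
      by simp
    then show "integrable R (\<lambda>z. W z *\<^sub>R \<phi> (F z))"
      by (intro integrable_pair_count_space_bool[OF Q, where C="2 * C", folded R_def]) auto
    have "(\<integral>z. W z *\<^sub>R \<phi> (F z) \<partial>R) = (\<integral>x. W (x, True) *\<^sub>R \<phi> (F (x, True)) \<partial>Q) + (\<integral>x. W (x, False) *\<^sub>R \<phi> (F (x, False)) \<partial>Q)"
      using \<open>\<And>z. norm (W z *\<^sub>R \<phi> (F z)) \<le> 2 * C\<close>
      by (intro integral_pair_count_space_bool[OF Q, where C="2 * C", folded R_def]) auto
    then show "(\<integral>z. W z *\<^sub>R \<phi> (F z) \<partial>R) = (\<integral>x. W (x, True) *\<^sub>R \<phi> (f1 x) \<partial>Q) + (\<integral>x. W (x, False) *\<^sub>R \<phi> (f2 x) \<partial>Q)"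
      by (simp add: F_def)
  qed
  have difference: "(\<integral>z. W1 z *\<^sub>R \<phi> (F z) \<partial>R) - (\<integral>z. W2 z *\<^sub>R \<phi> (F z) \<partial>R)
      = (\<integral>x. g1 x *\<^sub>R \<phi> (f1 x) \<partial>Q) - (\<integral>x. g2 x *\<^sub>R \<phi> (f2 x) \<partial>Q)"
    if [measurable]: "\<phi> \<in> borel_measurable borel" and "\<And>x. norm (\<phi> x) \<le> 1"
    for \<phi> :: "real \<Rightarrow> 'b::{banach,second_countable_topology}"
  proof -
    have bounds: "\<bar>W1 z\<bar> \<le> 2 * C" "\<bar>W2 z\<bar> \<le> 2 * C" "\<bar>W1 z - W2 z\<bar> \<le> 2 * C" for z
      using W_bounded[of z] by auto
    have diffs: "W1 (x, True) - W2 (x, True) = g1 x" "W1 (x, False) - W2 (x, False) = - g2 x" for x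
      by (simp_all add: W1_def W2_def)
    have "(\<integral>z. W1 z *\<^sub>R \<phi> (F z) \<partial>R) - (\<integral>z. W2 z *\<^sub>R \<phi> (F z) \<partial>R) = (\<integral>z. (W1 z - W2 z) *\<^sub>R \<phi> (F z) \<partial>R)"
      using that bounds by (simp add: doubled(1) scaleR_diff_left flip: Bochner_Integration.integral_diff)
    also have "\<dots> = (\<integral>x. (W1 (x, True) - W2 (x, True)) *\<^sub>R \<phi> (f1 x) \<partial>Q)
        + (\<integral>x. (W1 (x, False) - W2 (x, False)) *\<^sub>R \<phi> (f2 x) \<partial>Q)"
      using that bounds by (intro doubled(2)) auto
    also have "\<dots> = (\<integral>x. g1 x *\<^sub>R \<phi> (f1 x) \<partial>Q) - (\<integral>x. g2 x *\<^sub>R \<phi> (f2 x) \<partial>Q)"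
      unfolding diffs by (simp only: scaleR_minus_left integral_minus diff_conv_add_uminus)
    finally show ?thesis .
  qed
  have "(\<integral>z. W1 z * indicator B (F z) \<partial>R) = (\<integral>z. W2 z * indicator B (F z) \<partial>R)"
  proof (rule Levy_uniqueness_weighted[where C=C])
    show "finite_measure R"
      unfolding R_def using Q
      by (intro finite_measure_pair_measure finite_measure_count_space) (auto simp: prob_space_def)
    show "(\<integral>z. W1 z *\<^sub>R iexp (s * F z) \<partial>R) = (\<integral>z. W2 z *\<^sub>R iexp (s * F z) \<partial>R)" for s
      using difference[of "\<lambda>x. iexp (s * x)"] char_eq[of s] by (simp del: of_real_mult)
  qed (use W_bounded in auto)
  moreover have "norm (indicator B x :: real) \<le> 1" for x
    by (simp add: indicator_def)
  ultimately show ?thesis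
    using difference[of "indicator B :: real \<Rightarrow> real"] by simp
qed

lemma borel_measurable_cnj [measurable (raw)]:
  "f \<in> borel_measurable M \<Longrightarrow> (\<lambda>x. cnj (f x)) \<in> borel_measurable M"
  by (rule borel_measurable_continuous_on[where f=cnj]) (auto intro: continuous_intros)

lemma integral_Re_Im_scaleR:
  fixes h \<phi> :: "'q \<Rightarrow> complex"
  assumes "integrable Q (\<lambda>x. \<phi> x * h x)" "integrable Q (\<lambda>x. \<phi> x * cnj (h x))"
  shows "(\<integral>x. Re (h x) *\<^sub>R \<phi> x \<partial>Q) = ((\<integral>x. \<phi> x * h x \<partial>Q) + (\<integral>x. \<phi> x * cnj (h x) \<partial>Q)) / 2"
    and "(\<integral>x. Im (h x) *\<^sub>R \<phi> x \<partial>Q) = ((\<integral>x. \<phi> x * h x \<partial>Q) - (\<integral>x. \<phi> x * cnj (h x) \<partial>Q)) / (2 * \<i>)"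
proof -
  have Re_eq: "Re z *\<^sub>R e = (e * z + e * cnj z) / 2" for z e
    by (simp add: scaleR_conv_of_real distrib_left[symmetric] complex_add_cnj)
  have "(\<integral>x. Re (h x) *\<^sub>R \<phi> x \<partial>Q) = (\<integral>x. (\<phi> x * h x + \<phi> x * cnj (h x)) / 2 \<partial>Q)"
    unfolding Re_eq ..
  then show "(\<integral>x. Re (h x) *\<^sub>R \<phi> x \<partial>Q) = ((\<integral>x. \<phi> x * h x \<partial>Q) + (\<integral>x. \<phi> x * cnj (h x) \<partial>Q)) / 2"
    using assms by simp
  have Im_eq: "Im z *\<^sub>R e = (e * z - e * cnj z) / (2 * \<i>)" for z e
    by (simp add: scaleR_conv_of_real right_diff_distrib[symmetric] complex_diff_cnj mult.commute mult.left_commute)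
  have "(\<integral>x. Im (h x) *\<^sub>R \<phi> x \<partial>Q) = (\<integral>x. (\<phi> x * h x - \<phi> x * cnj (h x)) / (2 * \<i>) \<partial>Q)"
    unfolding Im_eq ..
  then show "(\<integral>x. Im (h x) *\<^sub>R \<phi> x \<partial>Q) = ((\<integral>x. \<phi> x * h x \<partial>Q) - (\<integral>x. \<phi> x * cnj (h x) \<partial>Q)) / (2 * \<i>)"
    using assms by (simp only: integral_divide_zero Bochner_Integration.integral_diff)
qed

lemma Levy_uniqueness_complex_weights:
  fixes f1 f2 :: "'q \<Rightarrow> real" and h1 h2 :: "'q \<Rightarrow> complex"
  assumes Q: "prob_space Q"
    and f_meas[measurable]: "f1 \<in> borel_measurable Q" "f2 \<in> borel_measurable Q"
    and h_meas[measurable]: "h1 \<in> borel_measurable Q" "h2 \<in> borel_measurable Q"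
    and h_bounded: "\<And>x. norm (h1 x) \<le> C" "\<And>x. norm (h2 x) \<le> C"
    and char_eq: "\<And>s. (\<integral>x. iexp (s * f1 x) * h1 x \<partial>Q) = (\<integral>x. iexp (s * f2 x) * h2 x \<partial>Q)"
    and char_cnj_eq: "\<And>s. (\<integral>x. iexp (s * f1 x) * cnj (h1 x) \<partial>Q) = (\<integral>x. iexp (s * f2 x) * cnj (h2 x) \<partial>Q)"
    and B[measurable]: "B \<in> sets borel"
  shows "(\<integral>x. indicator B (f1 x) *\<^sub>R h1 x \<partial>Q) = (\<integral>x. indicator B (f2 x) *\<^sub>R h2 x \<partial>Q)"
proof -
  interpret Q: prob_space Q by fact
  have integrable: "integrable Q g"
    if [measurable]: "g \<in> borel_measurable Q" and "\<And>x. norm (g x) \<le> D" for g :: "'q \<Rightarrow> 'b::{banach,second_countable_topology}" and D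
    using that by (intro Q.integrable_const_bound[where B=D]) auto
  have integrable_char: "integrable Q (\<lambda>x. iexp (s * f x) * h x)" "integrable Q (\<lambda>x. iexp (s * f x) * cnj (h x))"
    if [measurable]: "f \<in> borel_measurable Q" "h \<in> borel_measurable Q" and "\<And>x. norm (h x) \<le> C" for f h s
    using that by (auto intro!: integrable[of _ C] simp: norm_mult)
  have Re_char: "(\<integral>x. Re (h x) *\<^sub>R iexp (s * f x) \<partial>Q)
      = ((\<integral>x. iexp (s * f x) * h x \<partial>Q) + (\<integral>x. iexp (s * f x) * cnj (h x) \<partial>Q)) / 2"
    and Im_char: "(\<integral>x. Im (h x) *\<^sub>R iexp (s * f x) \<partial>Q)
      = ((\<integral>x. iexp (s * f x) * h x \<partial>Q) - (\<integral>x. iexp (s * f x) * cnj (h x) \<partial>Q)) / (2 * \<i>)"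
    if "f \<in> borel_measurable Q" "h \<in> borel_measurable Q" and "\<And>x. norm (h x) \<le> C" for f h s
    using integral_Re_Im_scaleR[OF integrable_char[OF that]] by simp_all
  have "\<bar>Re (h1 x)\<bar> \<le> C" "\<bar>Re (h2 x)\<bar> \<le> C" "\<bar>Im (h1 x)\<bar> \<le> C" "\<bar>Im (h2 x)\<bar> \<le> C" for x
    using h_bounded[of x] abs_Re_le_cmod abs_Im_le_cmod by (meson order_trans)+
  moreover note Re_char[OF f_meas(1) h_meas(1) h_bounded(1)] Re_char[OF f_meas(2) h_meas(2) h_bounded(2)]
    Im_char[OF f_meas(1) h_meas(1) h_bounded(1)] Im_char[OF f_meas(2) h_meas(2) h_bounded(2)]
  ultimately have "(\<integral>x. Re (h1 x) * indicator B (f1 x) \<partial>Q) = (\<integral>x. Re (h2 x) * indicator B (f2 x) \<partial>Q)"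
    and "(\<integral>x. Im (h1 x) * indicator B (f1 x) \<partial>Q) = (\<integral>x. Im (h2 x) * indicator B (f2 x) \<partial>Q)"
    by (intro Levy_uniqueness_signed_weights[OF Q, where C=C]; simp only: char_eq char_cnj_eq; measurable)+
  moreover have "integrable Q (\<lambda>x. indicator B (f1 x) *\<^sub>R h1 x)" "integrable Q (\<lambda>x. indicator B (f2 x) *\<^sub>R h2 x)"
    using h_bounded order_trans[OF norm_ge_zero h_bounded(1)]
    by (auto intro!: integrable[of _ C] simp: indicator_def)
  ultimately show ?thesis
    by (intro complex_eqI) (simp_all add: mult.commute flip: integral_Re integral_Im)
qed

lemma iexp_mult_scaleR_iexp:
  fixes p :: real
  shows "iexp u * (p *\<^sub>R iexp v) = p *\<^sub>R iexp (u + v)"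
    and "iexp u * cnj (p *\<^sub>R iexp v) = p *\<^sub>R iexp (u + - v)"
  by (simp_all only: iexp_add mult_scaleR_right) (simp add: scaleR_conv_of_real exp_cnj)

lemma borel_measurable_prod_indicator_iexp:
  fixes Z :: "'j \<Rightarrow> 'q \<Rightarrow> real"
  assumes "\<And>j. j \<in> I \<union> R \<Longrightarrow> Z j \<in> borel_measurable Q" and "\<And>j. j \<in> I \<Longrightarrow> B j \<in> sets borel"
  shows "(\<lambda>x. (\<Prod>j\<in>I. indicator (B j) (Z j x)) *\<^sub>R iexp (\<Sum>j\<in>R. t j * Z j x)) \<in> borel_measurable Q"
proof -
  have "(\<lambda>x. indicator (B j) (Z j x) :: real) \<in> borel_measurable Q" if "j \<in> I" for j
    using that assms by (auto intro: measurable_compose[OF _ borel_measurable_indicator])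
  then show ?thesis
    using assms(1)
    by (intro borel_measurable_scaleR borel_measurable_prod borel_measurable_continuous_on[where f=iexp]
        borel_measurable_sum borel_measurable_times) (auto intro: continuous_at_imp_continuous_on)
qed

text \<open>The induction step applies the one-dimensional uniqueness theorem to \<open>Z a\<close> with the remaining
  factor as a complex weight; the conjugate weight is the same factor for the frequencies \<open>- t\<close>.\<close>

lemma joint_char_eq_imp_mixed_eq:
  fixes Z1 Z2 :: "'j \<Rightarrow> 'q \<Rightarrow> real"
  assumes Q: "prob_space Q" and J: "finite J"
    and Z1_meas: "\<And>j. j \<in> J \<Longrightarrow> Z1 j \<in> borel_measurable Q"
    and Z2_meas: "\<And>j. j \<in> J \<Longrightarrow> Z2 j \<in> borel_measurable Q"
    and char_eq: "\<And>t. (\<integral>x. iexp (\<Sum>j\<in>J. t j * Z1 j x) \<partial>Q) = (\<integral>x. iexp (\<Sum>j\<in>J. t j * Z2 j x) \<partial>Q)"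
  shows "I \<subseteq> J \<Longrightarrow> (\<And>j. j \<in> I \<Longrightarrow> B j \<in> sets borel) \<Longrightarrow>
    (\<integral>x. (\<Prod>j\<in>I. indicator (B j) (Z1 j x)) *\<^sub>R iexp (\<Sum>j\<in>J - I. t j * Z1 j x) \<partial>Q)
  = (\<integral>x. (\<Prod>j\<in>I. indicator (B j) (Z2 j x)) *\<^sub>R iexp (\<Sum>j\<in>J - I. t j * Z2 j x) \<partial>Q)"
proof (induction I arbitrary: t rule: infinite_finite_induct)
  case (infinite I)
  then show ?case
    using J finite_subset by blast
next
  case empty
  then show ?case
    using char_eq[of t] by simp
next
  case (insert a I)
  have a: "a \<in> J" and I: "I \<subseteq> J" and B: "\<And>j. j \<in> insert a I \<Longrightarrow> B j \<in> sets borel"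
    using insert.prems by auto
  define R where "R = J - insert a I"
  have J_minus_I: "J - I = insert a R" and "a \<notin> R" "finite R" "I \<union> R \<subseteq> J"
    using a I insert.hyps J unfolding R_def by auto
  define h where "h Z x = (\<Prod>j\<in>I. indicator (B j) (Z j x)) *\<^sub>R iexp (\<Sum>j\<in>R. t j * Z j x)"
    for Z :: "'j \<Rightarrow> 'q \<Rightarrow> real" and x
  have sum_update: "(\<Sum>j\<in>J - I. (t'(a := s)) j * Z j x) = s * Z a x + (\<Sum>j\<in>R. t' j * Z j x)" for t' s Z x
    unfolding J_minus_I using \<open>a \<notin> R\<close> \<open>finite R\<close> by (auto intro!: sum.cong arg_cong2[where f="(+)"])
  have sum_neg: "(\<Sum>j\<in>R. - t j * Z j x) = - (\<Sum>j\<in>R. t j * Z j x)" for Z x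
    by (simp add: sum_negf)
  have "iexp (s * Z a x) * h Z x
      = (\<Prod>j\<in>I. indicator (B j) (Z j x)) *\<^sub>R iexp (\<Sum>j\<in>J - I. (t(a := s)) j * Z j x)"
    and "iexp (s * Z a x) * cnj (h Z x)
      = (\<Prod>j\<in>I. indicator (B j) (Z j x)) *\<^sub>R iexp (\<Sum>j\<in>J - I. ((\<lambda>j. - t j)(a := s)) j * Z j x)"
    for s Z x
    unfolding h_def sum_update sum_neg by (simp_all only: iexp_mult_scaleR_iexp)
  moreover have "h Z \<in> borel_measurable Q" if "\<And>j. j \<in> J \<Longrightarrow> Z j \<in> borel_measurable Q" for Z
    unfolding h_def using that B \<open>I \<union> R \<subseteq> J\<close> by (intro borel_measurable_prod_indicator_iexp) auto
  moreover have "norm (h Z x) \<le> 1" for Z x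
    unfolding h_def by (simp add: prod_nonneg prod_le_1 del: of_real_mult of_real_sum)
  ultimately have "(\<integral>x. indicator (B a) (Z1 a x) *\<^sub>R h Z1 x \<partial>Q) = (\<integral>x. indicator (B a) (Z2 a x) *\<^sub>R h Z2 x \<partial>Q)"
    using Z1_meas Z2_meas a B
    by (intro Levy_uniqueness_complex_weights[OF Q, where C=1]) (simp_all only: insert.IH[OF I] insertI1 insertI2)
  moreover have "indicator (B a) (Z a x) *\<^sub>R h Z x
      = (\<Prod>j\<in>insert a I. indicator (B j) (Z j x)) *\<^sub>R iexp (\<Sum>j\<in>J - insert a I. t j * Z j x)" for Z x
    unfolding h_def R_def using insert.hyps by simp
  ultimately show ?case
    by simp
qed

lemma emeasure_distr_PiM_box:
  fixes Z :: "'j \<Rightarrow> 'q \<Rightarrow> real"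
  assumes Q: "prob_space Q" and J: "finite J"
    and Z_meas: "\<And>j. j \<in> J \<Longrightarrow> Z j \<in> borel_measurable Q"
    and A: "\<And>j. j \<in> J \<Longrightarrow> A j \<in> sets borel"
  shows "emeasure (distr Q (PiM J (\<lambda>_. borel)) (\<lambda>x. \<lambda>j\<in>J. Z j x)) (Pi\<^sub>E J A)
    = ennreal (\<integral>x. (\<Prod>j\<in>J. indicator (A j) (Z j x)) \<partial>Q)"
proof -
  interpret Q: prob_space Q by fact
  have Z_vec: "(\<lambda>x. \<lambda>j\<in>J. Z j x) \<in> measurable Q (PiM J (\<lambda>_. borel))"
    by (rule measurable_restrict) (rule Z_meas)
  have box: "Pi\<^sub>E J A \<in> sets (PiM J (\<lambda>_. borel))"
    using A by (intro sets_PiM_I_finite J) auto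
  define S where "S = (\<lambda>x. \<lambda>j\<in>J. Z j x) -` Pi\<^sub>E J A \<inter> space Q"
  have S: "S \<in> sets Q"
    unfolding S_def using measurable_sets[OF Z_vec box] .
  have "indicator S x = (\<Prod>j\<in>J. indicator (A j) (Z j x) :: real)" if "x \<in> space Q" for x
    using that J by (auto simp: S_def indicator_def PiE_iff prod_zero_iff)
  then have "(\<integral>x. indicator S x \<partial>Q) = (\<integral>x. (\<Prod>j\<in>J. indicator (A j) (Z j x)) \<partial>Q :: real)"
    by (intro Bochner_Integration.integral_cong) auto
  then have "measure Q S = (\<integral>x. (\<Prod>j\<in>J. indicator (A j) (Z j x)) \<partial>Q)"
    using S by (simp add: Int_absorb2 sets.sets_into_space)
  then show ?thesis
    unfolding emeasure_distr[OF Z_vec box] S_def[symmetric] by (simp add: Q.emeasure_eq_measure)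
qed

theorem distr_PiM_eq_if_joint_char_eq:
  fixes Z1 Z2 :: "'j \<Rightarrow> 'q \<Rightarrow> real"
  assumes Q: "prob_space Q" and J: "finite J"
    and Z1_meas: "\<And>j. j \<in> J \<Longrightarrow> Z1 j \<in> borel_measurable Q"
    and Z2_meas: "\<And>j. j \<in> J \<Longrightarrow> Z2 j \<in> borel_measurable Q"
    and char_eq: "\<And>t. (\<integral>x. iexp (\<Sum>j\<in>J. t j * Z1 j x) \<partial>Q) = (\<integral>x. iexp (\<Sum>j\<in>J. t j * Z2 j x) \<partial>Q)"
  shows "distr Q (PiM J (\<lambda>_. borel)) (\<lambda>x. \<lambda>j\<in>J. Z1 j x) = distr Q (PiM J (\<lambda>_. borel)) (\<lambda>x. \<lambda>j\<in>J. Z2 j x)"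
proof (rule measure_eqI_PiM_finite[OF J])
  fix A :: "'j \<Rightarrow> real set"
  assume A: "\<And>j. j \<in> J \<Longrightarrow> A j \<in> sets borel"
  have "(\<integral>x. (\<Prod>j\<in>J. indicator (A j) (Z1 j x)) *\<^sub>R iexp (\<Sum>j\<in>J - J. 0 * Z1 j x) \<partial>Q)
      = (\<integral>x. (\<Prod>j\<in>J. indicator (A j) (Z2 j x)) *\<^sub>R iexp (\<Sum>j\<in>J - J. 0 * Z2 j x) \<partial>Q)"
    using A by (intro joint_char_eq_imp_mixed_eq[OF Q J Z1_meas Z2_meas char_eq]) auto
  then have "(\<integral>x. (\<Prod>j\<in>J. indicator (A j) (Z1 j x) :: real) \<partial>Q) = (\<integral>x. (\<Prod>j\<in>J. indicator (A j) (Z2 j x)) \<partial>Q)"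
    by (simp add: scaleR_conv_of_real del: of_real_prod)
  then show "emeasure (distr Q (PiM J (\<lambda>_. borel)) (\<lambda>x. \<lambda>j\<in>J. Z1 j x)) (Pi\<^sub>E J A)
      = emeasure (distr Q (PiM J (\<lambda>_. borel)) (\<lambda>x. \<lambda>j\<in>J. Z2 j x)) (Pi\<^sub>E J A)"
    by (simp add: emeasure_distr_PiM_box[OF Q J] Z1_meas Z2_meas A)
next
  interpret Q: prob_space Q by fact
  interpret D: prob_space "distr Q (PiM J (\<lambda>_. borel)) (\<lambda>x. \<lambda>j\<in>J. Z1 j x)"
    by (rule Q.prob_space_distr) (rule measurable_restrict, rule Z1_meas)
  show "range (\<lambda>_. space (PiM J (\<lambda>_. borel :: real measure))) \<subseteq> prod_algebra J (\<lambda>_. borel)"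
    using space_in_prod_algebra[of J "\<lambda>_. borel :: real measure"] by (auto simp: space_PiM)
  show "emeasure (distr Q (PiM J (\<lambda>_. borel)) (\<lambda>x. \<lambda>j\<in>J. Z1 j x)) (space (PiM J (\<lambda>_. borel))) \<noteq> \<infinity>"
    using D.emeasure_space_1 by simp
qed simp_all

section \<open>Gaussian moments\<close>

lemma distr_eq_if_char_eq:
  fixes Y :: "'a \<Rightarrow> real"
  assumes P: "prob_space P" and [measurable]: "Y \<in> borel_measurable P"
    and M: "real_distribution M" and char_eq: "\<And>t. (\<integral>w. iexp (t * Y w) \<partial>P) = char M t"
  shows "distr P borel Y = M"
proof (rule Levy_uniqueness)
  show "real_distribution (distr P borel Y)"
    using prob_space.prob_space_distr[OF P assms(2)] by (simp add: real_distribution_def real_distribution_axioms_def)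
  show "char (distr P borel Y) = char M"
    using char_eq by (auto simp: char_def integral_distr)
qed (fact M)

lemma AE_eq_0_if_char_eq_1:
  fixes Y :: "'a \<Rightarrow> real"
  assumes P: "prob_space P" and Y_meas[measurable]: "Y \<in> borel_measurable P"
    and char_Y: "\<And>t. (\<integral>w. iexp (t * Y w) \<partial>P) = 1"
  shows "AE w in P. Y w = 0"
proof -
  have D: "distr P borel Y = return borel 0"
    using char_Y
    by (intro distr_eq_if_char_eq[OF P Y_meas])
      (auto simp: real_distribution_def real_distribution_axioms_def prob_space_return char_def integral_return)
  have "AE x in return borel (0::real). x = 0"
    by (simp add: AE_return)
  then have "AE x in distr P borel Y. x = 0"
    by (simp only: D)
  then show ?thesis
    by (subst (asm) AE_distr_iff) auto
qed

lemma distr_std_normal_if_char: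
  fixes Y :: "'a \<Rightarrow> real"
  assumes P: "prob_space P" and [measurable]: "Y \<in> borel_measurable P" and "\<sigma> > 0"
    and char_Y: "\<And>t. (\<integral>w. iexp (t * Y w) \<partial>P) = complex_of_real (exp (- (t^2 * \<sigma>^2) / 2))"
  shows "distr P borel (\<lambda>w. Y w / \<sigma>) = std_normal_distribution"
proof (intro distr_eq_if_char_eq[OF P] real_dist_normal_dist)
  fix t
  have "t * (Y w / \<sigma>) = (t / \<sigma>) * Y w" for w
    by simp
  then have "(\<integral>w. iexp (t * (Y w / \<sigma>)) \<partial>P) = (\<integral>w. iexp ((t / \<sigma>) * Y w) \<partial>P)"
    by (simp only:)
  then show "(\<integral>w. iexp (t * (Y w / \<sigma>)) \<partial>P) = char std_normal_distribution t"
    using char_Y[of "t / \<sigma>"] \<open>\<sigma> > 0\<close> by (simp add: char_std_normal_distribution power_divide)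
qed simp

lemma gaussian_moments_if_char:
  fixes Y :: "'a \<Rightarrow> real"
  assumes P: "prob_space P" and Y_meas[measurable]: "Y \<in> borel_measurable P"
    and char_Y: "\<And>t. (\<integral>w. iexp (t * Y w) \<partial>P) = complex_of_real (exp (- (t^2 * q) / 2))"
  shows "integrable P Y" and "(\<integral>w. Y w \<partial>P) = 0"
    and "integrable P (\<lambda>w. (Y w)^2)" and "(\<integral>w. (Y w)^2 \<partial>P) = q"
proof -
  interpret P: prob_space P by fact
  have "norm (\<integral>w. iexp (1 * Y w) \<partial>P) \<le> 1"
    using integral_norm_bound[of P "\<lambda>w. iexp (1 * Y w)"] by (simp add: P.prob_space del: of_real_mult)
  then have "0 \<le> q"
    using char_Y[of 1] by simp
  have "integrable P Y \<and> (\<integral>w. Y w \<partial>P) = 0 \<and> integrable P (\<lambda>w. (Y w)^2) \<and> (\<integral>w. (Y w)^2 \<partial>P) = q"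
  proof (cases "q = 0")
    case True
    then have "AE w in P. Y w = 0"
      using char_Y by (intro AE_eq_0_if_char_eq_1[OF P Y_meas]) simp
    then have "AE w in P. Y w = 0 \<and> (Y w)^2 = 0"
      by eventually_elim simp
    then show ?thesis
      using True by (auto simp: integrable_cong_AE[of _ _ "\<lambda>_. 0"] integral_cong_AE[of _ _ "\<lambda>_. 0"])
  next
    case False
    define \<sigma> where "\<sigma> = sqrt q"
    have "\<sigma> > 0" "\<sigma>^2 = q"
      using False \<open>0 \<le> q\<close> by (auto simp: \<sigma>_def)
    then have std: "distr P borel (\<lambda>w. Y w / \<sigma>) = std_normal_distribution"
      using char_Y by (intro distr_std_normal_if_char[OF P Y_meas]) auto
    have moments: "integrable P (\<lambda>w. (Y w / \<sigma>)^k)" "(\<integral>w. (Y w / \<sigma>)^k \<partial>P) = (\<integral>x. x^k \<partial>std_normal_distribution)"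
      for k
      using integrable_std_normal_distribution_moment[of k]
      by (simp_all add: std[symmetric] integrable_distr_eq integral_distr)
    have "(\<integral>x. x^1 \<partial>std_normal_distribution) = 0" "(\<integral>x. x^2 \<partial>std_normal_distribution) = 1"
      using integral_std_normal_distribution_moment_odd[of 1] std_normal_distribution_even_moments(1)[of 1]
      by simp_all
    then have "integrable P Y" "(\<integral>w. Y w \<partial>P) = 0" "integrable P (\<lambda>w. (Y w)^2)"
      and "(\<integral>w. (Y w)^2 \<partial>P) / \<sigma>^2 = 1"
      using moments[of 1] moments[of 2] \<open>\<sigma> > 0\<close>
      by (simp_all add: power_divide divide_inverse power_mult_distrib power_inverse)
    then show ?thesis
      using \<open>\<sigma>^2 = q\<close> by simp
  qed
  then show "integrable P Y" "(\<integral>w. Y w \<partial>P) = 0" "integrable P (\<lambda>w. (Y w)^2)" "(\<integral>w. (Y w)^2 \<partial>P) = q"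
    by simp_all
qed

section \<open>Independence from a factorising characteristic function\<close>

lemma (in prob_space) integral_pair_fst:
  fixes f :: "'b \<Rightarrow> 'c::{banach,second_countable_topology}"
  assumes "f \<in> borel_measurable N"
  shows "(\<integral>z. f (fst z) \<partial>(N \<Otimes>\<^sub>M M)) = integral\<^sup>L N f"
  using integral_distr[of fst "N \<Otimes>\<^sub>M M" N f] assms by (simp add: distr_pair_fst)

lemma (in prob_space) integrable_pair_fst:
  fixes f :: "'b \<Rightarrow> 'c::{banach,second_countable_topology}"
  assumes "integrable N f"
  shows "integrable (N \<Otimes>\<^sub>M M) (\<lambda>z. f (fst z))"
  using integrable_distr_eq[of fst "N \<Otimes>\<^sub>M M" N f] assms by (simp add: distr_pair_fst)

lemma (in pair_prob_space) integral_fst_mult_snd: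
  fixes f g :: "_ \<Rightarrow> 'c::{real_normed_field,banach,second_countable_topology}"
  assumes f: "integrable M1 f" and g[measurable]: "g \<in> borel_measurable M2"
    and g_bounded: "\<And>y. norm (g y) \<le> B"
  shows "(\<integral>z. f (fst z) * g (snd z) \<partial>(M1 \<Otimes>\<^sub>M M2)) = (\<integral>x. f x \<partial>M1) * (\<integral>y. g y \<partial>M2)"
proof -
  have [measurable]: "f \<in> borel_measurable M1"
    using f by simp
  have "integrable (M1 \<Otimes>\<^sub>M M2) (\<lambda>z. B *\<^sub>R f (fst z))"
    using M2.integrable_pair_fst[OF f] by simp
  then have "integrable (M1 \<Otimes>\<^sub>M M2) (\<lambda>z. f (fst z) * g (snd z))"
  proof (rule Bochner_Integration.integrable_bound)
    show "AE z in M1 \<Otimes>\<^sub>M M2. norm (f (fst z) * g (snd z)) \<le> norm (B *\<^sub>R f (fst z))"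
      using g_bounded order_trans[OF norm_ge_zero g_bounded]
      by (intro AE_I2) (simp add: norm_mult mult.commute[of B] mult_left_mono)
  qed measurable
  then have "(\<integral>z. f (fst z) * g (snd z) \<partial>(M1 \<Otimes>\<^sub>M M2)) = (\<integral>x. (\<integral>y. f x * g y \<partial>M2) \<partial>M1)"
    by (simp add: integral_fst'[symmetric])
  then show ?thesis
    by simp
qed

text \<open>The index \<open>None\<close> stands for \<open>Y\<close> and \<open>Some k\<close> for \<open>V k\<close>; the right-hand side is the law of the
  independent copy \<open>(Y \<circ> fst, V \<circ> snd)\<close> on \<open>P \<Otimes> P\<close>.\<close>

lemma distr_independent_copy:
  fixes Y :: "'a \<Rightarrow> real" and V :: "'k \<Rightarrow> 'a \<Rightarrow> real"
  assumes P: "prob_space P" and K: "finite K" and Y_meas[measurable]: "Y \<in> borel_measurable P"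
    and V_meas: "\<And>k. k \<in> K \<Longrightarrow> V k \<in> borel_measurable P"
    and char_factor: "\<And>s t. (\<integral>w. iexp (s * Y w + (\<Sum>k\<in>K. t k * V k w)) \<partial>P)
      = (\<integral>w. iexp (s * Y w) \<partial>P) * (\<integral>w. iexp (\<Sum>k\<in>K. t k * V k w) \<partial>P)"
  defines "J \<equiv> insert None (Some ` K)"
    and "Z \<equiv> \<lambda>(\<pi> :: 'a \<times> 'a \<Rightarrow> 'a) j z. case j of None \<Rightarrow> Y (fst z) | Some k \<Rightarrow> V k (\<pi> z)"
  shows "distr (P \<Otimes>\<^sub>M P) (PiM J (\<lambda>_. borel)) (\<lambda>z. \<lambda>j\<in>J. Z fst j z)
    = distr (P \<Otimes>\<^sub>M P) (PiM J (\<lambda>_. borel)) (\<lambda>z. \<lambda>j\<in>J. Z snd j z)"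
proof (rule distr_PiM_eq_if_joint_char_eq)
  interpret pair_prob_space P P
    using P by (simp add: pair_prob_space_def pair_sigma_finite_def prob_space_imp_sigma_finite)
  show "prob_space (P \<Otimes>\<^sub>M P)" "finite J"
    using K by (simp_all add: prob_space_axioms J_def)
  have "Z \<pi> j \<in> borel_measurable (P \<Otimes>\<^sub>M P)" if "\<pi> \<in> measurable (P \<Otimes>\<^sub>M P) P" "j \<in> J" for \<pi> j
    using that V_meas by (auto simp: J_def Z_def intro: measurable_compose[OF that(1)])
  then show "Z fst j \<in> borel_measurable (P \<Otimes>\<^sub>M P)" "Z snd j \<in> borel_measurable (P \<Otimes>\<^sub>M P)" if "j \<in> J" for j
    using that by simp_all
  fix t
  have sum_J: "(\<Sum>j\<in>J. t j * Z \<pi> j z) = t None * Y (fst z) + (\<Sum>k\<in>K. t (Some k) * V k (\<pi> z))" for \<pi> z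
    using K by (simp add: J_def Z_def sum.reindex)
  have [measurable]: "(\<lambda>w. \<Sum>k\<in>K. t (Some k) * V k w) \<in> borel_measurable P"
    using V_meas by (intro borel_measurable_sum) measurable
  have "(\<integral>z. iexp (\<Sum>j\<in>J. t j * Z fst j z) \<partial>(P \<Otimes>\<^sub>M P))
      = (\<integral>w. iexp (t None * Y w + (\<Sum>k\<in>K. t (Some k) * V k w)) \<partial>P)"
    unfolding sum_J by (rule M1.integral_pair_fst) measurable
  also have "\<dots> = (\<integral>w. iexp (t None * Y w) \<partial>P) * (\<integral>w. iexp (\<Sum>k\<in>K. t (Some k) * V k w) \<partial>P)"
    by (rule char_factor)
  also have "\<dots> = (\<integral>z. iexp (t None * Y (fst z)) * iexp (\<Sum>k\<in>K. t (Some k) * V k (snd z)) \<partial>(P \<Otimes>\<^sub>M P))"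
    by (rule integral_fst_mult_snd[where B=1, symmetric])
      (auto intro!: M1.integrable_const_bound[where B=1] simp del: of_real_mult of_real_sum)
  finally show "(\<integral>z. iexp (\<Sum>j\<in>J. t j * Z fst j z) \<partial>(P \<Otimes>\<^sub>M P)) = (\<integral>z. iexp (\<Sum>j\<in>J. t j * Z snd j z) \<partial>(P \<Otimes>\<^sub>M P))"
    unfolding sum_J by (simp only: iexp_add)
qed

theorem integral_mult_indicator_if_char_factorizes:
  fixes Y :: "'a \<Rightarrow> real" and V :: "'k \<Rightarrow> 'a \<Rightarrow> real"
  assumes P: "prob_space P" and K: "finite K" and Y: "integrable P Y"
    and V_meas: "\<And>k. k \<in> K \<Longrightarrow> V k \<in> borel_measurable P"
    and char_factor: "\<And>s t. (\<integral>w. iexp (s * Y w + (\<Sum>k\<in>K. t k * V k w)) \<partial>P)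
      = (\<integral>w. iexp (s * Y w) \<partial>P) * (\<integral>w. iexp (\<Sum>k\<in>K. t k * V k w) \<partial>P)"
    and C[measurable]: "C \<in> sets (PiM K (\<lambda>_. borel))"
  shows "(\<integral>w. Y w * indicator C (\<lambda>k\<in>K. V k w) \<partial>P)
    = (\<integral>w. Y w \<partial>P) * (\<integral>w. indicator C (\<lambda>k\<in>K. V k w) \<partial>P)"
proof -
  interpret pair_prob_space P P
    using P by (simp add: pair_prob_space_def pair_sigma_finite_def prob_space_imp_sigma_finite)
  have Y_meas[measurable]: "Y \<in> borel_measurable P"
    using Y by simp
  have [measurable]: "(\<lambda>w. \<lambda>k\<in>K. V k w) \<in> measurable P (PiM K (\<lambda>_. borel))"
    by (rule measurable_restrict) (rule V_meas)
  define J where "J = insert None (Some ` K)"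
  define Z where "Z = (\<lambda>(\<pi> :: 'a \<times> 'a \<Rightarrow> 'a) j z. case j of None \<Rightarrow> Y (fst z) | Some k \<Rightarrow> V k (\<pi> z))"
  define copy where "copy \<pi> z = (\<lambda>j\<in>J. Z \<pi> j z)" for \<pi> :: "'a \<times> 'a \<Rightarrow> 'a" and z
  have copy_meas: "copy \<pi> \<in> measurable (P \<Otimes>\<^sub>M P) (PiM J (\<lambda>_. borel))" if "\<pi> \<in> measurable (P \<Otimes>\<^sub>M P) P" for \<pi>
    unfolding copy_def using that V_meas
    by (intro measurable_restrict) (auto simp: J_def Z_def intro: measurable_compose[OF that])
  define g where "g v = v None * indicator C (\<lambda>k\<in>K. v (Some k))" for v :: "'k option \<Rightarrow> real"
  have g_meas: "g \<in> borel_measurable (PiM J (\<lambda>_. borel))"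
  proof -
    have "(\<lambda>v. \<lambda>k\<in>K. v (Some k)) \<in> measurable (PiM J (\<lambda>_. borel :: real measure)) (PiM K (\<lambda>_. borel))"
      by (intro measurable_restrict measurable_component_singleton) (simp add: J_def)
    then show ?thesis
      unfolding g_def by (intro borel_measurable_times measurable_component_singleton
        measurable_compose[OF _ borel_measurable_indicator[OF C]]) (auto simp: J_def)
  qed
  have g_copy: "g (copy \<pi> z) = Y (fst z) * indicator C (\<lambda>k\<in>K. V k (\<pi> z))" for \<pi> z
    unfolding g_def copy_def by (simp add: J_def Z_def cong: restrict_cong)
  have "(\<integral>w. Y w * indicator C (\<lambda>k\<in>K. V k w) \<partial>P) = (\<integral>z. g (copy fst z) \<partial>(P \<Otimes>\<^sub>M P))"
    unfolding g_copy by (rule M1.integral_pair_fst[symmetric]) measurable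
  also have "\<dots> = integral\<^sup>L (distr (P \<Otimes>\<^sub>M P) (PiM J (\<lambda>_. borel)) (copy fst)) g"
    by (intro integral_distr[symmetric] copy_meas g_meas) simp
  also have "distr (P \<Otimes>\<^sub>M P) (PiM J (\<lambda>_. borel)) (copy fst) = distr (P \<Otimes>\<^sub>M P) (PiM J (\<lambda>_. borel)) (copy snd)"
    using distr_independent_copy[OF P K Y_meas V_meas char_factor] unfolding copy_def J_def Z_def .
  also have "integral\<^sup>L \<dots> g = (\<integral>z. g (copy snd z) \<partial>(P \<Otimes>\<^sub>M P))"
    by (intro integral_distr copy_meas g_meas) simp
  also have "\<dots> = (\<integral>w. Y w \<partial>P) * (\<integral>w. indicator C (\<lambda>k\<in>K. V k w) \<partial>P)"
    unfolding g_copy by (rule integral_fst_mult_snd[OF Y, where B=1]) (auto simp: indicator_def)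
  finally show ?thesis .
qed

section \<open>Generated \<sigma>-algebras\<close>

lemma gen_sigma_eq_sigma:
  "gen_sigma P f K = sigma (space P) {f k -` B \<inter> space P | k B. k \<in> K \<and> B \<in> sets borel}"
  unfolding gen_sigma_def ..

lemma
  assumes f_meas: "\<And>k. k \<in> K \<Longrightarrow> f k \<in> borel_measurable P"
  shows subalgebra_gen_sigma: "subalgebra P (gen_sigma P f K)"
    and measurable_gen_sigma: "k \<in> K \<Longrightarrow> f k \<in> borel_measurable (gen_sigma P f K)"
proof -
  define G where "G = {f k -` B \<inter> space P | k B. k \<in> K \<and> B \<in> sets (borel :: real measure)}"
  have G_space: "G \<subseteq> Pow (space P)"
    unfolding G_def by auto
  have sets_eq: "sets (gen_sigma P f K) = sigma_sets (space P) G"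
    unfolding gen_sigma_eq_sigma G_def[symmetric] using G_space by (rule sets_measure_of)
  have space_eq: "space (gen_sigma P f K) = space P"
    unfolding gen_sigma_eq_sigma G_def[symmetric] using G_space by (rule space_measure_of)
  have "G \<subseteq> sets P"
    unfolding G_def using f_meas measurable_sets by blast
  then show "subalgebra P (gen_sigma P f K)"
    unfolding subalgebra_def space_eq sets_eq using sets.sigma_sets_subset by auto
  show "f k \<in> borel_measurable (gen_sigma P f K)" if "k \<in> K"
  proof (rule measurableI)
    fix B :: "real set"
    assume "B \<in> sets borel"
    then have "f k -` B \<inter> space P \<in> G"
      unfolding G_def using that by blast
    then show "f k -` B \<inter> space (gen_sigma P f K) \<in> sets (gen_sigma P f K)"
      unfolding sets_eq space_eq by (rule sigma_sets.Basic)
  qed simp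
qed

lemma sets_gen_sigma_vimage:
  assumes f_meas: "\<And>k. k \<in> K \<Longrightarrow> f k \<in> borel_measurable P" and A: "A \<in> sets (gen_sigma P f K)"
  shows "\<exists>C \<in> sets (PiM K (\<lambda>_. borel)). A = (\<lambda>w. \<lambda>k\<in>K. f k w) -` C \<inter> space P"
proof -
  define F where "F w = (\<lambda>k\<in>K. f k w)" for w
  have F_meas: "F \<in> measurable P (PiM K (\<lambda>_. borel))"
    unfolding F_def by (rule measurable_restrict) (rule f_meas)
  define V where "V = vimage_algebra (space P) F (PiM K (\<lambda>_. borel :: real measure))"
  have sets_V: "sets V = {F -` C \<inter> space P | C. C \<in> sets (PiM K (\<lambda>_. borel :: real measure))}"
    unfolding V_def using measurable_space[OF F_meas] by (intro sets_vimage_algebra2) blast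
  have "f k -` B \<inter> space P \<in> sets V" if "k \<in> K" "B \<in> sets borel" for k B
  proof -
    define C where "C = (\<lambda>v. v k) -` B \<inter> space (PiM K (\<lambda>_. borel :: real measure))"
    have "C \<in> sets (PiM K (\<lambda>_. borel))"
      unfolding C_def using that by (intro measurable_sets[OF measurable_component_singleton])
    moreover have "f k -` B \<inter> space P = F -` C \<inter> space P"
      unfolding C_def F_def using that measurable_space[OF F_meas] by (auto simp: F_def)
    ultimately show ?thesis
      unfolding sets_V by blast
  qed
  then have "{f k -` B \<inter> space P | k B. k \<in> K \<and> B \<in> sets borel} \<subseteq> sets V"
    by blast
  from sets.sigma_sets_subset[OF this]
  have "sigma_sets (space P) {f k -` B \<inter> space P | k B. k \<in> K \<and> B \<in> sets borel} \<subseteq> sets V"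
    by (simp add: V_def)
  then have "A \<in> sets V"
    using A by (subst (asm) gen_sigma_eq_sigma, subst (asm) sets_measure_of) auto
  then show ?thesis
    unfolding sets_V F_def by blast
qed

section \<open>Counting subsets\<close>

lemma sum_sum_delta:
  assumes "finite S"
  shows "(\<Sum>u\<in>S. \<Sum>u'\<in>S. if u = i \<and> u' = j then g u u' else 0) = (if i \<in> S \<and> j \<in> S then g i j else 0)"
proof -
  have "(\<Sum>u'\<in>S. if u = i \<and> u' = j then g u u' else 0) = (if u = i then (if j \<in> S then g u j else 0) else 0)" for u
    using assms by (cases "u = i") (simp_all add: sum.delta')
  then show ?thesis
    using assms by (simp add: sum.delta')
qed

lemma card_supsets:
  assumes A: "finite A" and D: "D \<subseteq> A" "card D \<le> k"
  shows "card {S. S \<subseteq> A \<and> card S = k \<and> D \<subseteq> S} = (card A - card D) choose (k - card D)"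
proof -
  have fin_D: "finite D"
    using A D finite_subset by blast
  have "bij_betw (\<lambda>S. S - D) {S. S \<subseteq> A \<and> card S = k \<and> D \<subseteq> S} {T. T \<subseteq> A - D \<and> card T = k - card D}"
  proof (rule bij_betwI[where g="\<lambda>T. T \<union> D"])
    show "(\<lambda>T. T \<union> D) \<in> {T. T \<subseteq> A - D \<and> card T = k - card D} \<rightarrow> {S. S \<subseteq> A \<and> card S = k \<and> D \<subseteq> S}"
    proof
      fix T
      assume T: "T \<in> {T. T \<subseteq> A - D \<and> card T = k - card D}"
      then have "card (T \<union> D) = card T + card D"
        using A fin_D finite_subset by (intro card_Un_disjoint) auto
      then show "T \<union> D \<in> {S. S \<subseteq> A \<and> card S = k \<and> D \<subseteq> S}"
        using T D by auto
    qed
  qed (use fin_D in \<open>auto simp: card_Diff_subset\<close>)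
  then have "card {S. S \<subseteq> A \<and> card S = k \<and> D \<subseteq> S} = card {T. T \<subseteq> A - D \<and> card T = k - card D}"
    by (rule bij_betw_same_card)
  also have "\<dots> = card (A - D) choose (k - card D)"
    using A by (intro n_subsets) simp
  finally show ?thesis
    using D fin_D by (simp add: card_Diff_subset)
qed

section \<open>The observation model\<close>

locale subset_observations = prob_space P for P :: "'a measure" +
  fixes l m :: nat and \<rho> \<gamma> :: real
    and X :: "'a \<Rightarrow> nat \<Rightarrow> real"
    and N :: "nat set \<Rightarrow> 'a \<Rightarrow> nat \<Rightarrow> real"
    and U :: "nat set \<times> nat \<Rightarrow> 'a \<Rightarrow> real"
    and Subs :: "nat set set"
  assumes l_ge_2: "l \<ge> 2"
    and \<rho>_less_1: "\<rho> < 1"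
    and m_ge_2: "2 \<le> m"
    and \<gamma>_pos: "\<gamma> > 0"
    and Subs_def: "Subs = {S. S \<subseteq> {1..l} \<and> card S = m}"
    and X_gauss: "gaussian_vec P {1..l} X (\<lambda>i j. if i = j then 1 else \<rho>)"
    and N_gauss: "\<forall>S\<in>Subs. gaussian_vec P {..<m} (N S) (Mmat m)"
    and indep: "indep_vars
        (\<lambda>k. case k of None \<Rightarrow> PiM {1..l} (\<lambda>_. borel) | Some S \<Rightarrow> PiM {..<m} (\<lambda>_. borel))
        (\<lambda>k w. case k of None \<Rightarrow> restrict (X w) {1..l} | Some S \<Rightarrow> restrict (N S w) {..<m})
        (insert None (Some ` Subs))"
    and U_def: "\<forall>S\<in>Subs. \<forall>j<m. U (S, j) =
        (\<lambda>w. (\<Sum>k<m. Mmat m j k * X w (elem_of S k)) + sqrt \<gamma> * N S w j)"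
begin

text \<open>Every random variable of the proof is a linear combination \<open>lin a b\<close> of the independent
  Gaussian family formed by the \<open>X i\<close> and the \<open>N S j\<close>; its covariance structure is the bilinear
  form \<open>lin_cov\<close> of the block-diagonal covariance matrix.\<close>

definition lin :: "(nat \<Rightarrow> real) \<Rightarrow> (nat set \<Rightarrow> nat \<Rightarrow> real) \<Rightarrow> 'a \<Rightarrow> real" where
  "lin a b w = (\<Sum>i\<in>{1..l}. a i * X w i) + (\<Sum>S\<in>Subs. \<Sum>j<m. b S j * N S w j)"

definition lin_cov ::
    "(nat \<Rightarrow> real) \<Rightarrow> (nat set \<Rightarrow> nat \<Rightarrow> real) \<Rightarrow> (nat \<Rightarrow> real) \<Rightarrow> (nat set \<Rightarrow> nat \<Rightarrow> real) \<Rightarrow> real" where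
  "lin_cov a b a' b' = (\<Sum>i\<in>{1..l}. \<Sum>j\<in>{1..l}. a i * (if i = j then 1 else \<rho>) * a' j)
     + (\<Sum>S\<in>Subs. \<Sum>j<m. \<Sum>k<m. b S j * Mmat m j k * b' S k)"

lemma finite_Subs: "finite Subs"
  unfolding Subs_def by (rule finite_subset[of _ "Pow {1..l}"]) auto

lemma Subs_subset: "S \<in> Subs \<Longrightarrow> S \<subseteq> {1..l}"
  and card_Subs: "S \<in> Subs \<Longrightarrow> card S = m"
  and finite_Subs_elem: "S \<in> Subs \<Longrightarrow> finite S"
  unfolding Subs_def by (auto intro: finite_subset)

lemma X_measurable[measurable]: "i \<in> {1..l} \<Longrightarrow> (\<lambda>w. X w i) \<in> borel_measurable P"
  using X_gauss unfolding gaussian_vec_def by blast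

lemma N_measurable[measurable]: "S \<in> Subs \<Longrightarrow> j < m \<Longrightarrow> (\<lambda>w. N S w j) \<in> borel_measurable P"
  using N_gauss unfolding gaussian_vec_def by blast

lemma lin_measurable[measurable]: "lin a b \<in> borel_measurable P"
proof -
  have "(\<lambda>w. \<Sum>j<m. b S j * N S w j) \<in> borel_measurable P" if "S \<in> Subs" for S
    using that by (intro borel_measurable_sum) measurable
  then show ?thesis
    unfolding lin_def[abs_def] by (intro borel_measurable_add borel_measurable_sum) measurable
qed

lemma char_lin: "(\<integral>w. iexp (lin a b w) \<partial>P) = complex_of_real (exp (- lin_cov a b a b / 2))"
proof -
  define I where "I = insert None (Some ` Subs)"
  define F where "F k v = (case k of None \<Rightarrow> iexp (\<Sum>i\<in>{1..l}. a i * v i) | Some S \<Rightarrow> iexp (\<Sum>j<m. b S j * v j))"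
    for k :: "nat set option" and v
  define V where "V k w = (case k of None \<Rightarrow> restrict (X w) {1..l} | Some S \<Rightarrow> restrict (N S w) {..<m})" for k w
  have F_V: "F None (V None w) = iexp (\<Sum>i\<in>{1..l}. a i * X w i)"
    "F (Some S) (V (Some S) w) = iexp (\<Sum>j<m. b S j * N S w j)" for S w
    by (simp_all add: F_def V_def)
  have "indep_vars (\<lambda>_. borel) (\<lambda>k w. F k (V k w)) I"
    unfolding I_def V_def by (rule indep_vars_compose2[OF indep]) (auto simp: F_def split: option.split)
  moreover have "integrable P (\<lambda>w. F k (V k w))" if "k \<in> I" for k
  proof (rule integrable_const_bound[where B=1])
    show "(\<lambda>w. F k (V k w)) \<in> borel_measurable P"
      using that \<open>indep_vars _ _ I\<close> unfolding indep_vars_def by blast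
  qed (auto simp: F_def split: option.split simp del: of_real_sum of_real_mult)
  moreover have "iexp (lin a b w) = (\<Prod>k\<in>I. F k (V k w))" for w
  proof -
    have "(\<Prod>k\<in>I. F k (V k w)) = F None (V None w) * (\<Prod>S\<in>Subs. F (Some S) (V (Some S) w))"
      unfolding I_def using finite_Subs by (simp add: prod.reindex)
    then show ?thesis
      unfolding lin_def F_V by (simp only: iexp_add iexp_sum[OF finite_Subs])
  qed
  ultimately have "(\<integral>w. iexp (lin a b w) \<partial>P) = (\<Prod>k\<in>I. \<integral>w. F k (V k w) \<partial>P)"
    using finite_Subs by (simp only: indep_vars_lebesgue_integral finite_insert finite_imageI I_def)
  also have "\<dots> = (\<integral>w. F None (V None w) \<partial>P) * (\<Prod>S\<in>Subs. \<integral>w. F (Some S) (V (Some S) w) \<partial>P)"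
    unfolding I_def using finite_Subs by (simp add: prod.reindex)
  also have "\<dots> = exp (- (\<Sum>i\<in>{1..l}. \<Sum>j\<in>{1..l}. a i * (if i = j then 1 else \<rho>) * a j) / 2) *
      (\<Prod>S\<in>Subs. exp (- (\<Sum>j<m. \<Sum>k<m. b S j * Mmat m j k * b S k) / 2))"
    using X_gauss N_gauss unfolding gaussian_vec_def F_V by simp
  also have "\<dots> = exp (- lin_cov a b a b / 2)"
  proof -
    have "- lin_cov a b a b / 2 = - (\<Sum>i\<in>{1..l}. \<Sum>j\<in>{1..l}. a i * (if i = j then 1 else \<rho>) * a j) / 2
        + (\<Sum>S\<in>Subs. - (\<Sum>j<m. \<Sum>k<m. b S j * Mmat m j k * b S k) / 2)"
      unfolding lin_cov_def by (simp add: sum_negf sum_divide_distrib[symmetric] field_simps)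
    then show ?thesis
      by (simp only: exp_add exp_sum[OF finite_Subs] of_real_mult of_real_prod)
  qed
  finally show ?thesis .
qed

lemma lin_scale: "lin (\<lambda>i. t * a i) (\<lambda>S j. t * b S j) w = t * lin a b w"
  unfolding lin_def by (simp add: sum_distrib_left algebra_simps)

lemma lin_add: "lin (\<lambda>i. a i + a' i) (\<lambda>S j. b S j + b' S j) w = lin a b w + lin a' b' w"
  unfolding lin_def by (simp add: sum.distrib algebra_simps)

lemma lin_sum:
  "finite K \<Longrightarrow> lin (\<lambda>i. \<Sum>k\<in>K. t k * a k i) (\<lambda>S j. \<Sum>k\<in>K. t k * b k S j) w = (\<Sum>k\<in>K. t k * lin (a k) (b k) w)"
  unfolding lin_def
  by (simp add: distrib_left sum_distrib_left sum_distrib_right sum.distrib mult_ac sum.swap[of _ K])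

lemma lin_cov_sym: "lin_cov a' b' a b = lin_cov a b a' b'"
proof -
  have "(\<Sum>i\<in>{1..l}. \<Sum>j\<in>{1..l}. a' i * (if i = j then 1 else \<rho>) * a j)
      = (\<Sum>i\<in>{1..l}. \<Sum>j\<in>{1..l}. a i * (if i = j then 1 else \<rho>) * a' j)"
    by (subst sum.swap) (auto intro!: sum.cong)
  moreover have "(\<Sum>j<m. \<Sum>k<m. b' S j * Mmat m j k * b S k) = (\<Sum>j<m. \<Sum>k<m. b S j * Mmat m j k * b' S k)" for S
    by (subst sum.swap) (auto intro!: sum.cong simp: Mmat_def)
  ultimately show ?thesis
    unfolding lin_cov_def by simp
qed

lemma lin_cov_add_left:
  "lin_cov (\<lambda>i. a1 i + a2 i) (\<lambda>S j. b1 S j + b2 S j) a' b' = lin_cov a1 b1 a' b' + lin_cov a2 b2 a' b'"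
  unfolding lin_cov_def by (simp add: sum.distrib algebra_simps)

lemma lin_cov_scale_left: "lin_cov (\<lambda>i. t * a i) (\<lambda>S j. t * b S j) a' b' = t * lin_cov a b a' b'"
  unfolding lin_cov_def by (simp add: distrib_left sum_distrib_left mult_ac)

lemma lin_cov_sum_right:
  "finite K \<Longrightarrow> lin_cov a b (\<lambda>i. \<Sum>k\<in>K. t k * a' k i) (\<lambda>S j. \<Sum>k\<in>K. t k * b' k S j)
    = (\<Sum>k\<in>K. t k * lin_cov a b (a' k) (b' k))"
  unfolding lin_cov_def
  by (simp add: distrib_left sum_distrib_left sum_distrib_right sum.distrib mult_ac sum.swap[of _ K])

lemma lin_moments:
  shows "integrable P (lin a b)" and "(\<integral>w. lin a b w \<partial>P) = 0"
    and "integrable P (\<lambda>w. (lin a b w)^2)" and "(\<integral>w. (lin a b w)^2 \<partial>P) = lin_cov a b a b"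
proof -
  have "(\<integral>w. iexp (t * lin a b w) \<partial>P) = complex_of_real (exp (- (t^2 * lin_cov a b a b) / 2))" for t
    using char_lin[of "\<lambda>i. t * a i" "\<lambda>S j. t * b S j"]
    by (simp add: lin_scale lin_cov_scale_left lin_cov_sym[of _ _ "\<lambda>i. t * a i"] power2_eq_square mult_ac)
  from gaussian_moments_if_char[OF prob_space_axioms lin_measurable this]
  show "integrable P (lin a b)" "(\<integral>w. lin a b w \<partial>P) = 0"
    "integrable P (\<lambda>w. (lin a b w)^2)" "(\<integral>w. (lin a b w)^2 \<partial>P) = lin_cov a b a b"
    by simp_all
qed

lemma lin_cov_add_add:
  "lin_cov (\<lambda>i. a i + a' i) (\<lambda>S j. b S j + b' S j) (\<lambda>i. a i + a' i) (\<lambda>S j. b S j + b' S j)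
    = lin_cov a b a b + 2 * lin_cov a b a' b' + lin_cov a' b' a' b'"
  by (simp add: lin_cov_add_left lin_cov_sym[of _ _ "\<lambda>i. a i + a' i"] lin_cov_sym[of a' b' a b])

lemma integral_lin_mult:
  shows "integrable P (\<lambda>w. lin a b w * lin a' b' w)"
    and "(\<integral>w. lin a b w * lin a' b' w \<partial>P) = lin_cov a b a' b'"
proof -
  have polar: "lin a b w * lin a' b' w
      = ((lin (\<lambda>i. a i + a' i) (\<lambda>S j. b S j + b' S j) w)^2 - (lin a b w)^2 - (lin a' b' w)^2) / 2" for w
    unfolding lin_add by (simp add: power2_eq_square algebra_simps)
  show "integrable P (\<lambda>w. lin a b w * lin a' b' w)"
    unfolding polar using lin_moments(3) by simp
  show "(\<integral>w. lin a b w * lin a' b' w \<partial>P) = lin_cov a b a' b'"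
    unfolding polar using lin_moments(3,4) by (simp add: lin_cov_add_add)
qed

lemma bij_betw_elem_of: "S \<in> Subs \<Longrightarrow> bij_betw (elem_of S) {..<m} S"
  unfolding elem_of_def Subs_def by (rule bij_betw_nth) (auto simp: finite_subset[of _ "{1..l}"])

lemma sum_elem_of: "S \<in> Subs \<Longrightarrow> (\<Sum>j<m. g (elem_of S j)) = (\<Sum>u\<in>S. g u)"
  using sum.reindex_bij_betw[OF bij_betw_elem_of] by blast

lemma elem_of_in: "S \<in> Subs \<Longrightarrow> j < m \<Longrightarrow> elem_of S j \<in> S"
  using bij_betw_elem_of[unfolded bij_betw_def] by blast

lemma elem_of_eq_iff: "S \<in> Subs \<Longrightarrow> j < m \<Longrightarrow> k < m \<Longrightarrow> elem_of S j = elem_of S k \<longleftrightarrow> j = k"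
  using bij_betw_elem_of[unfolded bij_betw_def] by (auto dest: inj_onD)

definition c :: real where "c = real ((l - 2) choose (m - 2))"

lemma card_Subs_containing:
  assumes i: "i \<in> {1..l}" and v: "v \<in> {1..l}"
  shows "card {S\<in>Subs. i \<in> S \<and> v \<in> S} = (if v = i then (l - 1) choose (m - 1) else (l - 2) choose (m - 2))"
proof -
  have eq: "{S\<in>Subs. i \<in> S \<and> v \<in> S} = {S. S \<subseteq> {1..l} \<and> card S = m \<and> {i, v} \<subseteq> S}"
    unfolding Subs_def by auto
  show ?thesis
  proof (cases "v = i")
    case True
    then show ?thesis
      unfolding eq using card_supsets[of "{1..l}" "{i, v}" m] i m_ge_2 by simp
  next
    case False
    then show ?thesis
      unfolding eq using card_supsets[of "{1..l}" "{i, v}" m] i v m_ge_2 by (simp add: numeral_2_eq_2)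
  qed
qed

lemma pred_m_mult_choose_eq: "real (m - 1) * real ((l - 1) choose (m - 1)) = real (l - 1) * c"
proof -
  have "Suc (l - 2) * ((l - 2) choose (m - 2)) = (Suc (l - 2) choose Suc (m - 2)) * Suc (m - 2)"
    by (rule Suc_times_binomial_eq)
  moreover have "Suc (l - 2) = l - 1" "Suc (m - 2) = m - 1"
    using l_ge_2 m_ge_2 by auto
  ultimately have "(l - 1) * ((l - 2) choose (m - 2)) = ((l - 1) choose (m - 1)) * (m - 1)"
    by simp
  then have "real ((l - 1) * ((l - 2) choose (m - 2))) = real (((l - 1) choose (m - 1)) * (m - 1))"
    by simp
  then show ?thesis
    unfolding c_def by (simp add: mult.commute)
qed

lemma sum_Subs_containing:
  assumes i: "i \<in> {1..l}" and v: "v \<in> {1..l}"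
  shows "(\<Sum>S\<in>Subs. if i \<in> S \<and> v \<in> S then (if v = i then real m - 1 else - 1) else 0)
     = c * (if v = i then real l - 1 else - 1)"
proof -
  have "(\<Sum>S\<in>Subs. if i \<in> S \<and> v \<in> S then (if v = i then real m - 1 else - 1) else (0::real))
      = real (card {S\<in>Subs. i \<in> S \<and> v \<in> S}) * (if v = i then real m - 1 else - 1)"
    using finite_Subs by (simp add: sum.If_cases Int_def conj_commute)
  also have "\<dots> = c * (if v = i then real l - 1 else - 1)"
    unfolding card_Subs_containing[OF i v] using pred_m_mult_choose_eq m_ge_2 l_ge_2 unfolding c_def
    by (auto simp: of_nat_diff mult.commute)
  finally show ?thesis .
qed

lemma lin_cong:
  assumes "\<And>i. i \<in> {1..l} \<Longrightarrow> a i = a' i" and "\<And>S j. S \<in> Subs \<Longrightarrow> j < m \<Longrightarrow> b S j = b' S j"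
  shows "lin a b = lin a' b'"
  using assms unfolding lin_def[abs_def] by (intro ext arg_cong2[where f="(+)"] sum.cong) auto

definition obs :: "(nat set \<times> nat) set" where "obs = Subs \<times> {..<m}"

lemma finite_obs: "finite obs"
  unfolding obs_def using finite_Subs by simp

lemma sum_obs: "(\<Sum>k\<in>obs. f k) = (\<Sum>S\<in>Subs. \<Sum>j<m. f (S, j))"
  unfolding obs_def by (simp add: sum.cartesian_product)

definition U_coeffX :: "nat set \<times> nat \<Rightarrow> nat \<Rightarrow> real" where
  "U_coeffX k v = (if v \<in> fst k then (if v = elem_of (fst k) (snd k) then real m - 1 else - 1) else 0)"

definition U_coeffN :: "nat set \<times> nat \<Rightarrow> nat set \<Rightarrow> nat \<Rightarrow> real" where
  "U_coeffN k S j = (if (S, j) = k then sqrt \<gamma> else 0)"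

lemma U_eq_lin:
  assumes k: "k \<in> obs"
  shows "U k = lin (U_coeffX k) (U_coeffN k)"
proof
  fix w
  obtain T j' where k_eq: "k = (T, j')" and T: "T \<in> Subs" and j': "j' < m"
    using k unfolding obs_def by auto
  have "(\<Sum>i\<in>{1..l}. U_coeffX k i * X w i) = (\<Sum>v\<in>T. (if v = elem_of T j' then real m - 1 else - 1) * X w v)"
    using Subs_subset[OF T]
    by (simp add: U_coeffX_def k_eq if_distrib[of "\<lambda>x. x * _"] sum.inter_restrict[symmetric] Int_absorb1 cong: if_cong)
  also have "\<dots> = (\<Sum>i<m. Mmat m j' i * X w (elem_of T i))"
    using elem_of_eq_iff[OF T _ j'] by (simp add: sum_elem_of[OF T, symmetric] Mmat_def) (auto intro!: sum.cong)
  finally have X_part: "(\<Sum>i\<in>{1..l}. U_coeffX k i * X w i) = (\<Sum>i<m. Mmat m j' i * X w (elem_of T i))" .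
  have "(\<Sum>S\<in>Subs. \<Sum>j<m. U_coeffN k S j * N S w j)
      = (\<Sum>S\<in>Subs. if S = T then (\<Sum>j<m. if j = j' then sqrt \<gamma> * N T w j' else 0) else 0)"
    using j' by (intro sum.cong) (auto simp: U_coeffN_def k_eq if_distrib[of "\<lambda>x. x * _"] cong: if_cong)
  also have "\<dots> = sqrt \<gamma> * N T w j'"
    using finite_Subs T j' by simp
  finally show "U k w = lin (U_coeffX k) (U_coeffN k) w"
    unfolding lin_def X_part using U_def T j' k_eq by simp
qed

lemma U_combination_eq_lin:
  "(\<Sum>k\<in>obs. t k * U k w)
    = lin (\<lambda>v. \<Sum>k\<in>obs. t k * U_coeffX k v) (\<lambda>S j. \<Sum>k\<in>obs. t k * U_coeffN k S j) w"
  by (simp add: lin_sum[OF finite_obs] U_eq_lin)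

text \<open>\<open>Xhat i\<close> sums, with the factor \<open>\<alpha>\<close>, the observations \<open>U (S, j)\<close> in which \<open>X i\<close> enters with
  weight \<open>m - 1\<close>; \<open>\<alpha>\<close> is the factor that makes the residual \<open>X i - Xhat i\<close> uncorrelated with every
  observation (\<open>lin_cov_residual_U\<close>).\<close>

definition \<alpha> :: real where "\<alpha> = (1 - \<rho>) / ((1 - \<rho>) * c * real l + \<gamma>)"

lemma \<alpha>_mult_denominator: "\<alpha> * ((1 - \<rho>) * c * real l + \<gamma>) = 1 - \<rho>"
proof -
  have "(1 - \<rho>) * c * real l + \<gamma> > 0"
    using \<rho>_less_1 \<gamma>_pos by (simp add: c_def add_nonneg_pos)
  then show ?thesis
    unfolding \<alpha>_def by simp
qed

definition Xhat_weight :: "nat \<Rightarrow> nat set \<times> nat \<Rightarrow> real" where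
  "Xhat_weight i k = (if elem_of (fst k) (snd k) = i then \<alpha> else 0)"

definition Xhat :: "nat \<Rightarrow> 'a \<Rightarrow> real" where
  "Xhat i w = (\<Sum>k\<in>obs. Xhat_weight i k * U k w)"

definition res_coeffX :: "nat \<Rightarrow> nat \<Rightarrow> real" where
  "res_coeffX i v = (if v = i then 1 - \<alpha> * c * real l else 0) + \<alpha> * c"

definition res_coeffN :: "nat \<Rightarrow> nat set \<Rightarrow> nat \<Rightarrow> real" where
  "res_coeffN i S j = (if elem_of S j = i then - \<alpha> * sqrt \<gamma> else 0)"

lemma Xhat_coeffX:
  assumes i: "i \<in> {1..l}" and v: "v \<in> {1..l}"
  shows "(\<Sum>k\<in>obs. Xhat_weight i k * U_coeffX k v) = \<alpha> * c * (if v = i then real l - 1 else - 1)"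
proof -
  have "(\<Sum>j<m. Xhat_weight i (S, j) * U_coeffX (S, j) v)
      = \<alpha> * (if i \<in> S \<and> v \<in> S then (if v = i then real m - 1 else - 1) else 0)" if S: "S \<in> Subs" for S
  proof -
    have "(\<Sum>j<m. Xhat_weight i (S, j) * U_coeffX (S, j) v)
        = (\<Sum>u\<in>S. if u = i then \<alpha> * (if v \<in> S then (if v = u then real m - 1 else - 1) else 0) else 0)"
      unfolding sum_elem_of[OF S, symmetric] by (intro sum.cong) (auto simp: Xhat_weight_def U_coeffX_def)
    then show ?thesis
      using finite_Subs_elem[OF S] by simp
  qed
  then have "(\<Sum>k\<in>obs. Xhat_weight i k * U_coeffX k v)
      = \<alpha> * (\<Sum>S\<in>Subs. if i \<in> S \<and> v \<in> S then (if v = i then real m - 1 else - 1) else 0)"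
    unfolding sum_obs sum_distrib_left by (intro sum.cong) auto
  then show ?thesis
    by (simp add: sum_Subs_containing[OF i v])
qed

lemma Xhat_coeffN:
  assumes "S \<in> Subs" "j < m"
  shows "(\<Sum>k\<in>obs. Xhat_weight i k * U_coeffN k S j) = (if elem_of S j = i then \<alpha> * sqrt \<gamma> else 0)"
  using assms finite_obs by (simp add: U_coeffN_def Xhat_weight_def obs_def if_distrib[of "\<lambda>x. _ * x"] cong: if_cong)

lemma X_eq_lin:
  assumes "i \<in> {1..l}"
  shows "X w i = lin (\<lambda>v. if v = i then 1 else 0) (\<lambda>S j. 0) w"
  using assms by (simp add: lin_def if_distrib[of "\<lambda>x. x * _"] cong: if_cong)

lemma residual_eq_lin:
  assumes i: "i \<in> {1..l}"
  shows "X w i - Xhat i w = lin (res_coeffX i) (res_coeffN i) w"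
proof -
  define a where "a v = (\<Sum>k\<in>obs. Xhat_weight i k * U_coeffX k v)" for v
  define b where "b S j = (\<Sum>k\<in>obs. Xhat_weight i k * U_coeffN k S j)" for S j
  have "X w i = lin (\<lambda>v. if v = i then 1 else 0) (\<lambda>S j. 0) w" for w
    by (rule X_eq_lin[OF i])
  moreover have "Xhat i w = lin a b w" for w
    unfolding Xhat_def a_def b_def by (rule U_combination_eq_lin)
  ultimately have "X w i - Xhat i w = lin (\<lambda>v. (if v = i then 1 else 0) + - 1 * a v) (\<lambda>S j. 0 + - 1 * b S j) w" for w
    unfolding lin_add lin_scale by simp
  moreover have "lin (\<lambda>v. (if v = i then 1 else 0) + - 1 * a v) (\<lambda>S j. 0 + - 1 * b S j) = lin (res_coeffX i) (res_coeffN i)"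
    using i by (intro lin_cong) (auto simp: a_def b_def Xhat_coeffX Xhat_coeffN res_coeffX_def res_coeffN_def right_diff_distrib)
  ultimately show ?thesis
    by auto
qed

lemma sum_cov_row:
  assumes u: "u \<in> {1..l}"
  shows "(\<Sum>v\<in>{1..l}. (if u = v then 1 else \<rho>) * f v) = (1 - \<rho>) * f u + \<rho> * (\<Sum>v\<in>{1..l}. f v)"
proof -
  have "(\<Sum>v\<in>{1..l}. (if u = v then 1 else \<rho>) * f v) = (\<Sum>v\<in>{1..l}. (if v = u then (1 - \<rho>) * f v else 0) + \<rho> * f v)"
    by (rule sum.cong) (auto simp: algebra_simps)
  then show ?thesis
    using u by (simp add: sum.distrib sum_distrib_left)
qed

lemma sum_res_coeffX:
  "i \<in> {1..l} \<Longrightarrow> (\<Sum>v\<in>{1..l}. res_coeffX i v * f v) = (1 - \<alpha> * c * real l) * f i + \<alpha> * c * (\<Sum>v\<in>{1..l}. f v)"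
  by (simp add: res_coeffX_def distrib_right sum.distrib sum_distrib_left if_distrib[of "\<lambda>x. x * _"] cong: if_cong)

lemma sum_U_coeffX: "k \<in> obs \<Longrightarrow> (\<Sum>v\<in>{1..l}. U_coeffX k v) = 0"
proof -
  assume "k \<in> obs"
  then obtain T j where k: "k = (T, j)" and T: "T \<in> Subs" and j: "j < m"
    unfolding obs_def by auto
  have "(\<Sum>v\<in>{1..l}. U_coeffX k v) = (\<Sum>v\<in>T. (if v = elem_of T j then real m else 0) - 1)"
    using Subs_subset[OF T] unfolding U_coeffX_def k
    by (simp add: sum.inter_restrict[symmetric] Int_absorb1) (rule sum.cong; auto)
  also have "\<dots> = real m - real (card T)"
    using finite_Subs_elem[OF T] elem_of_in[OF T j] by (simp add: sum_subtractf)
  finally show ?thesis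
    using card_Subs[OF T] by simp
qed

lemma lin_cov_residual_U:
  assumes i: "i \<in> {1..l}" and k: "k \<in> obs"
  shows "lin_cov (res_coeffX i) (res_coeffN i) (U_coeffX k) (U_coeffN k) = 0"
proof -
  obtain T j' where k_eq: "k = (T, j')" and T: "T \<in> Subs" and j': "j' < m"
    using k unfolding obs_def by auto
  have "(\<Sum>u\<in>{1..l}. \<Sum>v\<in>{1..l}. res_coeffX i u * (if u = v then 1 else \<rho>) * U_coeffX k v)
      = (\<Sum>u\<in>{1..l}. res_coeffX i u * ((1 - \<rho>) * U_coeffX k u))"
    using sum_cov_row[of _ "U_coeffX k"] sum_U_coeffX[OF k]
    by (intro sum.cong) (simp_all add: sum_distrib_left[symmetric] mult.assoc)
  also have "\<dots> = (1 - \<rho>) * (1 - \<alpha> * c * real l) * U_coeffX k i"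
    using sum_res_coeffX[OF i, of "\<lambda>u. (1 - \<rho>) * U_coeffX k u"] sum_U_coeffX[OF k]
    by (simp add: sum_distrib_left[symmetric])
  finally have X_part: "(\<Sum>u\<in>{1..l}. \<Sum>v\<in>{1..l}. res_coeffX i u * (if u = v then 1 else \<rho>) * U_coeffX k v)
      = (1 - \<rho>) * (1 - \<alpha> * c * real l) * U_coeffX k i" .
  have "(\<Sum>S\<in>Subs. \<Sum>j<m. \<Sum>j''<m. res_coeffN i S j * Mmat m j j'' * U_coeffN k S j'')
      = (\<Sum>S\<in>Subs. if S = T then (\<Sum>j<m. res_coeffN i T j * Mmat m j j' * sqrt \<gamma>) else 0)"
    using j' by (intro sum.cong) (auto simp: U_coeffN_def k_eq if_distrib[of "\<lambda>x. _ * x"] cong: if_cong)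
  also have "\<dots> = - \<alpha> * \<gamma> * (\<Sum>j<m. if elem_of T j = i then Mmat m j j' else 0)"
    using finite_Subs T \<gamma>_pos
    by (simp add: res_coeffN_def sum_distrib_left if_distrib[of "\<lambda>x. x * _"] cong: if_cong)
      (rule sum.cong; simp add: mult_ac real_sqrt_mult_self[of \<gamma>, unfolded real_sqrt_mult[symmetric]])
  also have "(\<Sum>j<m. if elem_of T j = i then Mmat m j j' else 0) = U_coeffX k i"
  proof -
    have "(\<Sum>j<m. if elem_of T j = i then Mmat m j j' else 0)
        = (\<Sum>u\<in>T. if u = i then (if u = elem_of T j' then real m - 1 else - 1) else 0)"
      unfolding sum_elem_of[OF T, symmetric] using elem_of_eq_iff[OF T _ j']
      by (intro sum.cong) (auto simp: Mmat_def)
    then show ?thesis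
      using finite_Subs_elem[OF T] by (simp add: U_coeffX_def k_eq)
  qed
  finally have N_part: "(\<Sum>S\<in>Subs. \<Sum>j<m. \<Sum>j''<m. res_coeffN i S j * Mmat m j j'' * U_coeffN k S j'')
      = - \<alpha> * \<gamma> * U_coeffX k i" .
  have "(1 - \<rho>) * (1 - \<alpha> * c * real l) - \<alpha> * \<gamma> = 0"
    using \<alpha>_mult_denominator by (simp add: algebra_simps)
  then show ?thesis
    unfolding lin_cov_def X_part N_part by (simp add: algebra_simps)
qed

lemma res_coeffN_quadratic:
  assumes S: "S \<in> Subs"
  shows "(\<Sum>j1<m. \<Sum>j2<m. res_coeffN i S j1 * Mmat m j1 j2 * res_coeffN j S j2)
    = \<alpha>^2 * \<gamma> * (if i \<in> S \<and> j \<in> S then (if j = i then real m - 1 else - 1) else 0)"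
proof -
  define F where "F u u' = (if u = i \<and> u' = j then \<alpha>^2 * \<gamma> * (if u = u' then real m - 1 else - 1) else 0)" for u u'
  have "res_coeffN i S j1 * Mmat m j1 j2 * res_coeffN j S j2 = F (elem_of S j1) (elem_of S j2)"
    if "j1 < m" "j2 < m" for j1 j2
    using that elem_of_eq_iff[OF S, of j1 j2] \<gamma>_pos by (auto simp: res_coeffN_def Mmat_def F_def power2_eq_square)
  then have "(\<Sum>j1<m. \<Sum>j2<m. res_coeffN i S j1 * Mmat m j1 j2 * res_coeffN j S j2)
      = (\<Sum>j1<m. \<Sum>u'\<in>S. F (elem_of S j1) u')"
    by (simp add: sum_elem_of[OF S])
  also have "\<dots> = (\<Sum>u\<in>S. \<Sum>u'\<in>S. F u u')"
    by (rule sum_elem_of[OF S])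
  also have "\<dots> = \<alpha>^2 * \<gamma> * (if i \<in> S \<and> j \<in> S then (if j = i then real m - 1 else - 1) else 0)"
    unfolding F_def sum_sum_delta[OF finite_Subs_elem[OF S]] by auto
  finally show ?thesis .
qed

lemma lin_cov_residual_expansion:
  assumes i: "i \<in> {1..l}" and j: "j \<in> {1..l}"
  shows "lin_cov (res_coeffX i) (res_coeffN i) (res_coeffX j) (res_coeffN j)
    = (1 - \<rho>) * ((if i = j then (1 - \<alpha> * c * real l)^2 else 0)
        + 2 * (1 - \<alpha> * c * real l) * (\<alpha> * c) + real l * (\<alpha> * c)^2)
      + \<rho> + \<alpha>^2 * \<gamma> * c * (if i = j then real l - 1 else - 1)"
proof -
  define A where "A = 1 - \<alpha> * c * real l"
  define B where "B = \<alpha> * c"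
  have res_sum: "(\<Sum>v\<in>{1..l}. res_coeffX j v) = 1"
    using sum_res_coeffX[OF j, of "\<lambda>_. 1"] by simp
  have "(\<Sum>u\<in>{1..l}. \<Sum>v\<in>{1..l}. res_coeffX i u * (if u = v then 1 else \<rho>) * res_coeffX j v)
      = (\<Sum>u\<in>{1..l}. res_coeffX i u * ((1 - \<rho>) * res_coeffX j u + \<rho>))"
    using sum_cov_row[of _ "res_coeffX j"] res_sum
    by (intro sum.cong) (simp_all add: sum_distrib_left[symmetric] mult.assoc)
  also have "\<dots> = A * ((1 - \<rho>) * res_coeffX j i + \<rho>) + B * ((1 - \<rho>) + real l * \<rho>)"
    using sum_res_coeffX[OF i, of "\<lambda>u. (1 - \<rho>) * res_coeffX j u + \<rho>"] res_sum
    by (simp add: A_def B_def sum.distrib sum_distrib_left[symmetric])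
  also have "\<dots> = (1 - \<rho>) * ((if i = j then A^2 else 0) + 2 * A * B + real l * B^2) + \<rho>"
    by (cases "i = j") (simp_all add: res_coeffX_def A_def B_def algebra_simps power2_eq_square)
  finally have X_part: "(\<Sum>u\<in>{1..l}. \<Sum>v\<in>{1..l}. res_coeffX i u * (if u = v then 1 else \<rho>) * res_coeffX j v)
      = (1 - \<rho>) * ((if i = j then A^2 else 0) + 2 * A * B + real l * B^2) + \<rho>" .
  have "(\<Sum>S\<in>Subs. \<Sum>j1<m. \<Sum>j2<m. res_coeffN i S j1 * Mmat m j1 j2 * res_coeffN j S j2)
      = \<alpha>^2 * \<gamma> * (\<Sum>S\<in>Subs. if i \<in> S \<and> j \<in> S then (if j = i then real m - 1 else - 1) else 0)"
    by (simp add: res_coeffN_quadratic sum_distrib_left)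
  also have "\<dots> = \<alpha>^2 * \<gamma> * c * (if i = j then real l - 1 else - 1)"
    by (auto simp: sum_Subs_containing[OF i j])
  finally show ?thesis
    unfolding lin_cov_def X_part A_def B_def by simp
qed

lemma lin_cov_residual:
  assumes i: "i \<in> {1..l}" and j: "j \<in> {1..l}"
  shows "lin_cov (res_coeffX i) (res_coeffN i) (res_coeffX j) (res_coeffN j)
    = (if i = j then 1 - c * (real l - 1) * (1 - \<rho>)\<^sup>2 / (\<gamma> + c * real l * (1 - \<rho>))
       else \<rho> + c * (1 - \<rho>)\<^sup>2 / (\<gamma> + c * real l * (1 - \<rho>)))"
proof -
  have "\<alpha> * \<gamma> = (1 - \<rho>) - \<alpha> * (1 - \<rho>) * c * real l"
    using \<alpha>_mult_denominator by (simp add: algebra_simps)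
  then have "\<alpha> * (\<alpha> * \<gamma>) = \<alpha> * ((1 - \<rho>) - \<alpha> * (1 - \<rho>) * c * real l)"
    by simp
  then have \<gamma>_term: "\<alpha>^2 * \<gamma> = \<alpha> * (1 - \<rho>) - \<alpha>^2 * (1 - \<rho>) * c * real l"
    by (simp add: algebra_simps power2_eq_square)
  have denom: "\<gamma> + c * real l * (1 - \<rho>) = (1 - \<rho>) * c * real l + \<gamma>"
    by (simp add: algebra_simps)
  have "c * (real l - 1) * (1 - \<rho>)\<^sup>2 / (\<gamma> + c * real l * (1 - \<rho>)) = c * (real l - 1) * (1 - \<rho>) * \<alpha>"
    and "c * (1 - \<rho>)\<^sup>2 / (\<gamma> + c * real l * (1 - \<rho>)) = c * (1 - \<rho>) * \<alpha>"
    unfolding denom \<alpha>_def by (simp_all add: power2_eq_square)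
  moreover have "\<alpha>^2 * \<gamma> * c * (real l - 1) = (\<alpha> * (1 - \<rho>) - \<alpha>^2 * (1 - \<rho>) * c * real l) * c * (real l - 1)"
    and "\<alpha>^2 * \<gamma> * c * (- 1) = - ((\<alpha> * (1 - \<rho>) - \<alpha>^2 * (1 - \<rho>) * c * real l) * c)"
    using \<gamma>_term by simp_all
  ultimately show ?thesis
    unfolding lin_cov_residual_expansion[OF i j]
    by (cases "i = j") (simp_all only: if_True if_False, simp_all add: algebra_simps power2_eq_square)
qed

lemma char_residual_U_factorizes:
  assumes i: "i \<in> {1..l}"
  shows "(\<integral>w. iexp (s * (X w i - Xhat i w) + (\<Sum>k\<in>obs. t k * U k w)) \<partial>P)
    = (\<integral>w. iexp (s * (X w i - Xhat i w)) \<partial>P) * (\<integral>w. iexp (\<Sum>k\<in>obs. t k * U k w) \<partial>P)"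
proof -
  define a where "a v = s * res_coeffX i v" for v
  define b where "b S j = s * res_coeffN i S j" for S j
  define a' where "a' v = (\<Sum>k\<in>obs. t k * U_coeffX k v)" for v
  define b' where "b' S j = (\<Sum>k\<in>obs. t k * U_coeffN k S j)" for S j
  have residual: "s * (X w i - Xhat i w) = lin a b w" for w
    using residual_eq_lin[OF i] unfolding a_def b_def lin_scale by simp
  have observations: "(\<Sum>k\<in>obs. t k * U k w) = lin a' b' w" for w
    unfolding a'_def b'_def by (rule U_combination_eq_lin)
  have "lin_cov a b a' b' = 0"
    unfolding a_def b_def a'_def b'_def lin_cov_scale_left lin_cov_sum_right[OF finite_obs]
    by (simp add: lin_cov_residual_U[OF i])
  then have "exp (- lin_cov (\<lambda>v. a v + a' v) (\<lambda>S j. b S j + b' S j) (\<lambda>v. a v + a' v) (\<lambda>S j. b S j + b' S j) / 2)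
      = exp (- lin_cov a b a b / 2) * exp (- lin_cov a' b' a' b' / 2)"
    using lin_cov_sym[of a' b' a b] by (simp add: lin_cov_add_add exp_add[symmetric] field_simps)
  then show ?thesis
    unfolding residual observations lin_add[symmetric] char_lin by simp
qed

lemma U_measurable: "k \<in> obs \<Longrightarrow> U k \<in> borel_measurable P"
  using U_eq_lin by simp

lemma residual_orthogonal:
  assumes i: "i \<in> {1..l}" and C: "C \<in> sets (PiM obs (\<lambda>_. borel))"
  shows "(\<integral>w. (X w i - Xhat i w) * indicator C (\<lambda>k\<in>obs. U k w) \<partial>P) = 0"
proof -
  have "integrable P (\<lambda>w. X w i - Xhat i w)" "(\<integral>w. X w i - Xhat i w \<partial>P) = 0"
    by (simp_all add: residual_eq_lin[OF i] lin_moments)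
  then show ?thesis
    using U_measurable char_residual_U_factorizes[OF i]
    by (simp add: integral_mult_indicator_if_char_factorizes[OF prob_space_axioms finite_obs _ _ _ C])
qed

lemma integrable_X: "i \<in> {1..l} \<Longrightarrow> integrable P (\<lambda>w. X w i)"
  using lin_moments(1) by (simp add: X_eq_lin)

lemma integrable_Xhat:
  assumes i: "i \<in> {1..l}"
  shows "integrable P (Xhat i)"
proof -
  have "integrable P (\<lambda>w. X w i - (X w i - Xhat i w))"
    using integrable_X[OF i] lin_moments(1) by (simp add: residual_eq_lin[OF i])
  then show ?thesis
    by simp
qed

lemma cond_exp_X:
  assumes i: "i \<in> {1..l}"
  shows "AE w in P. real_cond_exp P (gen_sigma P U obs) (\<lambda>w. X w i) w = Xhat i w"
proof (rule sigma_finite_subalgebra.real_cond_exp_charact)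
  have subalgebra: "subalgebra P (gen_sigma P U obs)"
    by (intro subalgebra_gen_sigma[where f=U and K=obs] U_measurable)
  then show "sigma_finite_subalgebra P (gen_sigma P U obs)"
    by (intro finite_measure_subalgebra_is_sigma_finite finite_measure_subalgebra.intro
        finite_measure_subalgebra_axioms.intro finite_measure_axioms)
  show "integrable P (\<lambda>w. X w i)" "integrable P (Xhat i)"
    using i by (rule integrable_X, rule integrable_Xhat)
  show "Xhat i \<in> borel_measurable (gen_sigma P U obs)"
    unfolding Xhat_def[abs_def] using U_measurable
    by (intro borel_measurable_sum borel_measurable_times measurable_gen_sigma) auto
  fix A
  assume "A \<in> sets (gen_sigma P U obs)"
  then have "\<exists>C \<in> sets (PiM obs (\<lambda>_. borel)). A = (\<lambda>w. \<lambda>k\<in>obs. U k w) -` C \<inter> space P"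
    by (intro sets_gen_sigma_vimage[where f=U and K=obs] U_measurable)
  then obtain C where C: "C \<in> sets (PiM obs (\<lambda>_. borel))" and A: "A = (\<lambda>w. \<lambda>k\<in>obs. U k w) -` C \<inter> space P"
    by blast
  have "A \<in> sets P"
    using \<open>A \<in> sets (gen_sigma P U obs)\<close> subalgebra by (auto simp: subalgebra_def)
  then have "(\<integral>w\<in>A. X w i \<partial>P) - (\<integral>w\<in>A. Xhat i w \<partial>P)
      = (\<integral>w. indicator A w *\<^sub>R X w i - indicator A w *\<^sub>R Xhat i w \<partial>P)"
    unfolding set_lebesgue_integral_def
    by (intro Bochner_Integration.integral_diff[symmetric] integrable_mult_indicator integrable_X integrable_Xhat i)
  also have "\<dots> = (\<integral>w. (X w i - Xhat i w) * indicator C (\<lambda>k\<in>obs. U k w) \<partial>P)"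
    unfolding A by (intro Bochner_Integration.integral_cong) (auto simp: indicator_def)
  finally show "(\<integral>w\<in>A. X w i \<partial>P) = (\<integral>w\<in>A. Xhat i w \<partial>P)"
    using residual_orthogonal[OF i C] by simp
qed

lemma error_covariance:
  assumes i: "i \<in> {1..l}" and j: "j \<in> {1..l}"
  shows "(\<integral>w. (X w i - real_cond_exp P (gen_sigma P U obs) (\<lambda>w. X w i) w)
      * (X w j - real_cond_exp P (gen_sigma P U obs) (\<lambda>w. X w j) w) \<partial>P)
    = lin_cov (res_coeffX i) (res_coeffN i) (res_coeffX j) (res_coeffN j)"
proof -
  have "(\<integral>w. (X w i - real_cond_exp P (gen_sigma P U obs) (\<lambda>w. X w i) w)
      * (X w j - real_cond_exp P (gen_sigma P U obs) (\<lambda>w. X w j) w) \<partial>P)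
    = (\<integral>w. (X w i - Xhat i w) * (X w j - Xhat j w) \<partial>P)"
    using cond_exp_X[OF i] cond_exp_X[OF j] i j
    by (intro integral_cong_AE) (auto simp: residual_eq_lin elim: AE_mp)
  also have "\<dots> = lin_cov (res_coeffX i) (res_coeffN i) (res_coeffX j) (res_coeffN j)"
    by (simp only: residual_eq_lin[OF i] residual_eq_lin[OF j] integral_lin_mult)
  finally show ?thesis .
qed

end

theorem proposition4:
  fixes P :: "'a measure"
    and l m :: nat and \<rho> \<gamma> :: real
    and X :: "'a \<Rightarrow> nat \<Rightarrow> real"
    and N :: "nat set \<Rightarrow> 'a \<Rightarrow> nat \<Rightarrow> real"
    and U :: "nat set \<times> nat \<Rightarrow> 'a \<Rightarrow> real"
    and Subs :: "nat set set"
  assumes "prob_space P"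
    and "l \<ge> 2"
    and "- 1 / (real l - 1) < \<rho>" and "\<rho> < 1"
    and "2 \<le> m" and "m \<le> l"
    and "\<gamma> > 0"
    and Subs_def: "Subs = {S. S \<subseteq> {1..l} \<and> card S = m}"
    and X_gauss: "gaussian_vec P {1..l} X (\<lambda>i j. if i = j then 1 else \<rho>)"
    and N_gauss: "\<forall>S\<in>Subs. gaussian_vec P {..<m} (N S) (Mmat m)"
    and indep: "prob_space.indep_vars P
        (\<lambda>k. case k of None \<Rightarrow> PiM {1..l} (\<lambda>_. borel) | Some S \<Rightarrow> PiM {..<m} (\<lambda>_. borel))
        (\<lambda>k w. case k of None \<Rightarrow> restrict (X w) {1..l} | Some S \<Rightarrow> restrict (N S w) {..<m})
        (insert None (Some ` Subs))"
    and U_def: "\<forall>S\<in>Subs. \<forall>j<m. U (S, j) =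
        (\<lambda>w. (\<Sum>k<m. Mmat m j k * X w (elem_of S k)) + sqrt \<gamma> * N S w j)"
  shows "(\<forall>i\<in>{1..l}.
            (\<integral>w. (X w i - real_cond_exp P (gen_sigma P U (Subs \<times> {..<m})) (\<lambda>w. X w i) w)\<^sup>2 \<partial>P)
            = 1 - real ((l - 2) choose (m - 2)) * (real l - 1) * (1 - \<rho>)\<^sup>2
                  / (\<gamma> + real ((l - 2) choose (m - 2)) * real l * (1 - \<rho>)))
       \<and> (\<forall>i\<in>{1..l}. \<forall>j\<in>{1..l}. i \<noteq> j \<longrightarrow>
            (\<integral>w. (X w i - real_cond_exp P (gen_sigma P U (Subs \<times> {..<m})) (\<lambda>w. X w i) w)
                 * (X w j - real_cond_exp P (gen_sigma P U (Subs \<times> {..<m})) (\<lambda>w. X w j) w) \<partial>P)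
            = \<rho> + real ((l - 2) choose (m - 2)) * (1 - \<rho>)\<^sup>2
                  / (\<gamma> + real ((l - 2) choose (m - 2)) * real l * (1 - \<rho>)))"
proof -
  interpret subset_observations P l m \<rho> \<gamma> X N U Subs
    unfolding subset_observations_def subset_observations_axioms_def by (intro conjI; fact)
  have "(\<integral>w. (X w i - real_cond_exp P (gen_sigma P U obs) (\<lambda>w. X w i) w)\<^sup>2 \<partial>P)
      = 1 - c * (real l - 1) * (1 - \<rho>)\<^sup>2 / (\<gamma> + c * real l * (1 - \<rho>))" if "i \<in> {1..l}" for i
    using error_covariance[OF that that] lin_cov_residual[OF that that] by (simp add: power2_eq_square)
  moreover have "(\<integral>w. (X w i - real_cond_exp P (gen_sigma P U obs) (\<lambda>w. X w i) w)
      * (X w j - real_cond_exp P (gen_sigma P U obs) (\<lambda>w. X w j) w) \<partial>P)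
      = \<rho> + c * (1 - \<rho>)\<^sup>2 / (\<gamma> + c * real l * (1 - \<rho>))" if "i \<in> {1..l}" "j \<in> {1..l}" "i \<noteq> j" for i j
    using error_covariance[OF that(1,2)] lin_cov_residual[OF that(1,2)] that(3) by simp
  ultimately show ?thesis
    unfolding obs_def c_def by blast
qed

end
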